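(* Let $n\ge \max\{m,p\}$ be positive integers, $A\in\mathbb{R}^{n\times n}$ and $E\in\mathbb{R}^{p\times p}$ symmetric positive definite, $B\in\mathbb{R}^{m\times n}$ of full row rank, $C\in\mathbb{R}^{p\times m}$ of full rank, $D\in\mathbb{R}^{m\times m}$ symmetric positive semidefinite, and $\widehat A,\widehat S,\widehat X$ symmetric positive definite of sizes $n,m,p$. Let $$\mathcal{A}=\begin{bmatrix}A&B^T&0\\ B&-D&C^T\\ 0&C&E\end{bmatrix},\qquad \mathcal{P}=\begin{bmatrix}\widehat A&B^T&0\\ 0&-\widehat S&C^T\\ 0&0&\widehat X\end{bmatrix}.$$ Set $\overline A=\widehat A^{-1/2}A\widehat A^{-1/2}$, $\overline D=\widehat S^{-1/2}D\widehat S^{-1/2}$, $\overline E=\widehat X^{-1/2}E\widehat X^{-1/2}$, $R=\widehat S^{-1/2}B\widehat A^{-1/2}$, $K=\widehat X^{-1/2}C\widehat S^{-1/2}$, $\widetilde S=D+B\widehat A^{-1}B^T$, $\widetilde X=E+C\widehat S^{-1}C^T$, and define $\gamma^A_{\min/\max}=\lambda_{\min/\max}(\widehat A^{-1}A)$, $\gamma^S_{\max}=\lambda_{\max}(\widehat S^{-1}\widetilde S)$, $\gamma^X_{\max}=\lambda_{\max}(\widehat X^{-1}\widetilde X)$, $\gamma^D_{\max}=\lambda_{\max}(\widehat S^{-1}D)$, $\gamma^E_{\min}=\lambda_{\min}(\widehat X^{-1}E)$, $\gamma^R_{\min}=\lambda_{\min}(RR^T)$. Assume $1\in[\gamma^A_{\min},\gamma^A_{\max}]$.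 Let $\lambda$ be a real eigenvalue of $\mathcal{A}\mathcal{P}^{-1}$ with $$\lambda\notin\left[\min\left\{\gamma^A_{\min},\frac{\gamma^R_{\min}}{\gamma^A_{\max}+\gamma^R_{\min}+\gamma^D_{\max}}\right\},\ \gamma^A_{\max}+\gamma^S_{\max}\right].$$ Then there are numbers $\gamma_A=q(\overline A,w_1)$, $\gamma_R=q(RR^T,w_2)$, $\gamma_D=q(\overline D,w_2)$, $\gamma_K=q(KK^T,w_3)$, $\gamma_E=q(\overline E,w_3)$ for some nonzero real vectors $w_1,w_2,w_3$ of appropriate sizes, such that, with $\gamma_S=\gamma_R+\gamma_D$ and $\gamma_X=\gamma_K+\gamma_E$, $\lambda$ satisfies $$\lambda^3-(\gamma_A+\gamma_S+\gamma_X)\lambda^2+(\gamma_A\gamma_X+\gamma_K+\gamma_E\gamma_S+\gamma_D\gamma_A+\gamma_R)\lambda-(\gamma_A\gamma_K+\gamma_E\gamma_A\gamma_D+\gamma_E\gamma_R)=0,$$ and moreover $$\min\left\{\gamma^E_{\min},\gamma^A_{\min},\frac{\gamma^R_{\min}}{\gamma^A_{\max}+\gamma^R_{\min}+\gamma^D_{\max}}\right\}\le\lambda\le\gamma^A_{\max}+\gamma^S_{\max}+\gamma^X_{\max}.$$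
   Context: For a square matrix $H$ and nonzero vector $w$, $q(H,w)=\frac{w^*Hw}{w^*w}$ is the Rayleigh quotient. $\lambda_{\min}$, $\lambda_{\max}$ denote smallest and largest eigenvalues. The assumption $1\in[\gamma^A_{\min},\gamma^A_{\max}]$ is a standing assumption of the paper's analysis. *)

theory Defs
  imports "HOL-Analysis.Analysis"
begin

text \<open>Matrices are HOL-Analysis matrices real^'c^'r (r rows, c columns); sizes are
  the cardinalities of the finite index types.\<close>

definition sym_mat :: "real^'n^'n \<Rightarrow> bool" where
  "sym_mat M \<longleftrightarrow> transpose M = M"

definition spd :: "real^'n^'n \<Rightarrow> bool" where
  "spd M \<longleftrightarrow> sym_mat M \<and> (\<forall>x. x \<noteq> 0 \<longrightarrow> x \<bullet> (M *v x) > 0)"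

definition spsd :: "real^'n^'n \<Rightarrow> bool" where
  "spsd M \<longleftrightarrow> sym_mat M \<and> (\<forall>x. x \<bullet> (M *v x) \<ge> 0)"

definition rq :: "real^'n^'n \<Rightarrow> real^'n \<Rightarrow> real" where
  "rq H w = (w \<bullet> (H *v w)) / (w \<bullet> w)"

definition real_eigs :: "real^'n^'n \<Rightarrow> real set" where
  "real_eigs M = {l. \<exists>v. v \<noteq> 0 \<and> M *v v = l *\<^sub>R v}"

definition lam_min :: "real^'n^'n \<Rightarrow> real" where
  "lam_min M = Min (real_eigs M)"

definition lam_max :: "real^'n^'n \<Rightarrow> real" where
  "lam_max M = Max (real_eigs M)"

definition inv_sqrt :: "real^'n^'n \<Rightarrow> real^'n^'n" where
  "inv_sqrt M = (THE S. spd S \<and> S ** S = matrix_inv M)"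

text \<open>3x3 block matrix; index type ('n + 'm) + 'p: Inl (Inl i) is the first block,
  Inl (Inr i) the second, Inr i the third.\<close>
definition block3 ::
  "real^'n^'n \<Rightarrow> real^'m^'n \<Rightarrow> real^'p^'n \<Rightarrow>
   real^'n^'m \<Rightarrow> real^'m^'m \<Rightarrow> real^'p^'m \<Rightarrow>
   real^'n^'p \<Rightarrow> real^'m^'p \<Rightarrow> real^'p^'p \<Rightarrow> real^(('n+'m)+'p)^(('n+'m)+'p)" where
  "block3 M11 M12 M13 M21 M22 M23 M31 M32 M33 =
     (\<chi> i j. case i of
        Inl (Inl a) \<Rightarrow> (case j of Inl (Inl b) \<Rightarrow> M11$a$b | Inl (Inr b) \<Rightarrow> M12$a$b | Inr b \<Rightarrow> M13$a$b)
      | Inl (Inr a) \<Rightarrow> (case j of Inl (Inl b) \<Rightarrow> M21$a$b | Inl (Inr b) \<Rightarrow> M22$a$b | Inr b \<Rightarrow> M23$a$b)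
      | Inr a \<Rightarrow> (case j of Inl (Inl b) \<Rightarrow> M31$a$b | Inl (Inr b) \<Rightarrow> M32$a$b | Inr b \<Rightarrow> M33$a$b))"

end

theory Submission
  imports Defs
begin

(* Scaling by the inverse square roots of the diagonal blocks of P turns an eigenvector of
   A P^-1 for lambda into a nonzero (x, y, z) with
     (Abar - lambda) x = (lambda - 1) R^T y,
     R x + (lambda - Dbar) y = (lambda - 1) K^T z,
     K y + Ebar z = lambda z.
   Outside the excluded interval both Abar - lambda and the Schur complement
   M = (lambda - 1) R (Abar - lambda)^-1 R^T + lambda - Dbar are definite, so x and y can be
   eliminated, and testing the last equation with z leaves
   (lambda - 1) u^T M^-1 u = |z|^2 (lambda - q(Ebar, z)),  u = K^T z.
   For a definite symmetric T, u^T T^-1 u = |u|^2 / q(T, w) for some w != 0; this turns both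
   inverses into Rayleigh quotients, and the three scalar relations combine into the cubic.  The
   upper bound bounds the roots of the cubic; the lower bound comes from the sign of u^T M^-1 u. *)

lemma sym_mat_inner: "sym_mat M \<Longrightarrow> x \<bullet> (M *v y) = (M *v x) \<bullet> (y::real^'n)"
  unfolding sym_mat_def by (metis dot_lmul_matrix transpose_matrix_vector)

lemma sym_matI:
  fixes M :: "real^'n^'n"
  assumes "\<And>x y. x \<bullet> (M *v y) = (M *v x) \<bullet> y"
  shows "sym_mat M"
proof -
  have "(transpose M *v x) \<bullet> y = (M *v x) \<bullet> y" for x y
    using assms[of x y] by (metis dot_lmul_matrix transpose_matrix_vector)
  then have "transpose M *v x = M *v x" for x
    using vector_eq_rdot by blast
  then show ?thesis
    unfolding sym_mat_def using matrix_eq by blast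
qed

lemma inner_transpose_matrix_vector: "x \<bullet> ((A::real^'n^'m) *v y) = (transpose A *v x) \<bullet> y"
  by (metis dot_lmul_matrix transpose_matrix_vector)

lemma uminus_matrix_vector: "(- (A::real^'n^'m)) *v x = - (A *v x)"
  by (simp add: matrix_vector_mult_def vec_eq_iff sum_negf)

lemma matrix_vector_uminus: "(A::real^'n^'m) *v (- x) = - (A *v x)"
  by (simp add: matrix_vector_mult_def vec_eq_iff sum_negf)

lemma sym_mat_add: "sym_mat X \<Longrightarrow> sym_mat Y \<Longrightarrow> sym_mat (X + Y)"
  unfolding sym_mat_def by (simp add: transpose_def vec_eq_iff)

lemma sym_mat_uminus: "sym_mat T \<Longrightarrow> sym_mat (- T)"
  by (rule sym_matI) (simp add: uminus_matrix_vector sym_mat_inner)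

lemma sym_mat_mult_transpose: "sym_mat ((A::real^'n^'m) ** transpose A)"
  unfolding sym_mat_def by (simp add: matrix_transpose_mul)

lemma sym_mat_congruence:
  fixes G S :: "real^'n^'n"
  assumes "sym_mat G" "sym_mat S"
  shows "sym_mat (S ** G ** S)"
  using assms unfolding sym_mat_def by (simp add: matrix_transpose_mul matrix_mul_assoc)

lemma sym_mat_mult_transpose_congruence:
  fixes X :: "real^'n^'n" and R :: "real^'n^'m"
  assumes "sym_mat X"
  shows "sym_mat (R ** X ** transpose R)"
  using assms unfolding sym_mat_def by (simp add: matrix_transpose_mul matrix_mul_assoc)

lemma sym_mat_shift: "sym_mat H \<Longrightarrow> sym_mat (H - l *\<^sub>R mat 1)"
  unfolding sym_mat_def by (simp add: transpose_def vec_eq_iff mat_def)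

lemma spd_sym: "spd M \<Longrightarrow> sym_mat M"
  unfolding spd_def by auto

lemma spd_pos: "spd M \<Longrightarrow> x \<noteq> 0 \<Longrightarrow> x \<bullet> (M *v x) > 0"
  unfolding spd_def by auto

lemma spd_mult_vec_eq_0_iff: "spd M \<Longrightarrow> M *v x = 0 \<longleftrightarrow> x = 0"
  using spd_pos[of M x] by fastforce

lemma matrix_inv_right: "invertible A \<Longrightarrow> A ** matrix_inv A = mat 1"
  and matrix_inv_left: "invertible A \<Longrightarrow> matrix_inv A ** A = mat 1"
  unfolding invertible_def matrix_inv_def by (metis (mono_tags, lifting) someI_ex)+

lemma
  fixes A :: "real^'n^'n"
  assumes "invertible A"
  shows matrix_inv_cancel_right: "A *v (matrix_inv A *v x) = x"
    and matrix_inv_cancel_left: "matrix_inv A *v (A *v x) = x"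
  using matrix_inv_right[OF assms] matrix_inv_left[OF assms] by (simp_all add: matrix_vector_mul_assoc)

lemma invertible_mult_vec_eq_0_iff: "invertible (A::real^'n^'n) \<Longrightarrow> A *v x = 0 \<longleftrightarrow> x = 0"
  by (metis matrix_inv_cancel_left matrix_vector_mult_0_right)

lemma invertibleI_kernel:
  fixes A :: "real^'n^'n"
  assumes "\<And>x. A *v x = 0 \<Longrightarrow> x = 0"
  shows "invertible A"
  using assms matrix_left_invertible_ker invertible_left_inverse by blast

lemma matrix_inv_unique:
  fixes A B :: "real^'n^'n"
  assumes "A ** B = mat 1"
  shows "matrix_inv A = B"
proof -
  have inv: "invertible A" using assms invertible_right_inverse by blast
  have "matrix_inv A = matrix_inv A ** (A ** B)" using assms by simp
  also have "\<dots> = (matrix_inv A ** A) ** B" by (simp add: matrix_mul_assoc)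
  finally show ?thesis using matrix_inv_left[OF inv] by simp
qed

lemma matrix_inv_uminus:
  fixes T :: "real^'n^'n"
  assumes "invertible T"
  shows "matrix_inv (- T) = - matrix_inv T"
proof (rule matrix_inv_unique)
  have "(- T) ** (- matrix_inv T) = T ** matrix_inv T"
    by (simp add: matrix_eq matrix_vector_mul_assoc[symmetric] uminus_matrix_vector matrix_vector_uminus)
  then show "(- T) ** (- matrix_inv T) = mat 1" using matrix_inv_right[OF assms] by simp
qed

lemma invertible_uminus: "invertible (A::real^'n^'n) \<Longrightarrow> invertible (- A)"
  using invertible_mult_vec_eq_0_iff[of A] by (intro invertibleI_kernel) (simp add: uminus_matrix_vector)

lemma spd_invertible: "spd (M::real^'n^'n) \<Longrightarrow> invertible M"
  by (rule invertibleI_kernel) (simp add: spd_mult_vec_eq_0_iff)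

lemma sym_mat_matrix_inv:
  fixes M :: "real^'n^'n"
  assumes "sym_mat M" "invertible M"
  shows "sym_mat (matrix_inv M)"
proof (rule sym_matI)
  fix x y :: "real^'n"
  have "x \<bullet> (matrix_inv M *v y) = (M *v (matrix_inv M *v x)) \<bullet> (matrix_inv M *v y)"
    using matrix_inv_cancel_right[OF assms(2)] by simp
  also have "\<dots> = (matrix_inv M *v x) \<bullet> y"
    using sym_mat_inner[OF assms(1)] matrix_inv_cancel_right[OF assms(2)] by metis
  finally show "x \<bullet> (matrix_inv M *v y) = (matrix_inv M *v x) \<bullet> y" .
qed

lemma inner_matrix_inv:
  "invertible (M::real^'n^'n) \<Longrightarrow>
    u \<bullet> (matrix_inv M *v u) = (matrix_inv M *v u) \<bullet> (M *v (matrix_inv M *v u))"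
  by (simp add: matrix_inv_cancel_right inner_commute)

lemma spd_matrix_inv:
  fixes M :: "real^'n^'n"
  assumes "spd M"
  shows "spd (matrix_inv M)"
  unfolding spd_def
proof safe
  have inv: "invertible M" using spd_invertible[OF assms] .
  show "sym_mat (matrix_inv M)" using sym_mat_matrix_inv[OF spd_sym[OF assms] inv] .
  fix x :: "real^'n" assume "x \<noteq> 0"
  then have "matrix_inv M *v x \<noteq> 0" using matrix_inv_cancel_right[OF inv, of x] by auto
  then show "0 < x \<bullet> (matrix_inv M *v x)" using spd_pos[OF assms] inner_matrix_inv[OF inv] by metis
qed

section \<open>The spectral theorem\<close>

lemma quadratic_nonneg_imp_linear_coeff_zero:
  fixes a b :: real
  assumes "\<And>t. a * t\<^sup>2 + b * t \<ge> 0"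
  shows "b = 0"
proof (rule ccontr)
  assume b: "b \<noteq> 0"
  define d where "d = 2 * (\<bar>a\<bar> + 1)"
  have d: "d > 0" unfolding d_def by simp
  have "a * (- b / d)\<^sup>2 + b * (- b / d) = (b\<^sup>2 / d) * (a / d - 1)"
    using d by (simp add: field_simps power2_eq_square)
  moreover have "b\<^sup>2 / d > 0" using b d by simp
  moreover have "a / d - 1 < 0" using d unfolding d_def by (simp add: field_simps; linarith)
  ultimately have "a * (- b / d)\<^sup>2 + b * (- b / d) < 0" by (metis diff_less_0_iff_less mult_pos_neg)
  with assms[of "- b / d"] show False by simp
qed

text \<open>A vector minimising the Rayleigh quotient of a symmetric matrix over an invariant
  subspace is an eigenvector: the quadratic form minus the minimum is nonnegative on the
  subspace, so its first variation at the minimiser vanishes.\<close>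

lemma sym_mat_eigenvector_in_invariant_subspace:
  fixes M :: "real^'n^'n"
  assumes sym: "sym_mat M" and W: "subspace W" and inv: "\<And>x. x \<in> W \<Longrightarrow> M *v x \<in> W"
    and w: "w \<in> W" "w \<noteq> 0"
  shows "\<exists>v\<in>W. v \<bullet> v = 1 \<and> M *v v = (v \<bullet> (M *v v)) *\<^sub>R v"
proof -
  let ?S = "W \<inter> sphere 0 1"
  have "compact ?S" using closed_subspace[OF W] compact_sphere by (rule closed_Int_compact)
  moreover have "w /\<^sub>R norm w \<in> ?S" using w W by (auto simp: subspace_scale)
  moreover have "continuous_on ?S (\<lambda>x. x \<bullet> (M *v x))"
    by (intro continuous_intros matrix_vector_mult_linear_continuous_on)
  ultimately obtain v where v: "v \<in> ?S" and vmin: "\<And>y. y \<in> ?S \<Longrightarrow> v \<bullet> (M *v v) \<le> y \<bullet> (M *v y)"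
    using continuous_attains_inf[of ?S] by blast
  define mu where "mu = v \<bullet> (M *v v)"
  have vW: "v \<in> W" and vv: "v \<bullet> v = 1" using v by (auto simp: norm_eq_1)
  have nonneg: "x \<bullet> (M *v x) - mu * (x \<bullet> x) \<ge> 0" if "x \<in> W" for x
  proof (cases "x = 0")
    case False
    have "x /\<^sub>R norm x \<in> ?S" using False \<open>x \<in> W\<close> W by (auto simp: subspace_scale)
    then have "mu \<le> (x /\<^sub>R norm x) \<bullet> (M *v (x /\<^sub>R norm x))" using vmin unfolding mu_def by blast
    also have "\<dots> = (x \<bullet> (M *v x)) / (norm x)\<^sup>2"
      by (simp add: matrix_vector_mult_scaleR power2_eq_square field_simps)
    finally show ?thesis using False by (simp add: field_simps power2_norm_eq_inner)
  qed simp
  have orth: "2 * (u \<bullet> (M *v v - mu *\<^sub>R v)) = 0" if "u \<in> W" for u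
  proof (rule quadratic_nonneg_imp_linear_coeff_zero[where a = "u \<bullet> (M *v u) - mu * (u \<bullet> u)"])
    fix t :: real
    have "v + t *\<^sub>R u \<in> W" using vW \<open>u \<in> W\<close> W by (simp add: subspace_add subspace_scale)
    from nonneg[OF this]
    have "0 \<le> (v + t *\<^sub>R u) \<bullet> (M *v (v + t *\<^sub>R u)) - mu * ((v + t *\<^sub>R u) \<bullet> (v + t *\<^sub>R u))" .
    also have "\<dots> = (u \<bullet> (M *v u) - mu * (u \<bullet> u)) * t\<^sup>2 + (2 * (u \<bullet> (M *v v - mu *\<^sub>R v))) * t"
      using sym_mat_inner[OF sym, of v u] vv mu_def
      by (simp add: matrix_vector_right_distrib matrix_vector_mult_scaleR inner_add_left inner_add_right
          inner_diff_right algebra_simps power2_eq_square inner_commute)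
    finally show "0 \<le> \<dots>" .
  qed
  have "M *v v - mu *\<^sub>R v \<in> W" using inv[OF vW] vW W by (simp add: subspace_diff subspace_scale)
  from orth[OF this] have "M *v v = mu *\<^sub>R v" by simp
  then show ?thesis using vW vv mu_def by blast
qed

definition orthonormal_eigvecs :: "real^'n^'n \<Rightarrow> (real^'n) set \<Rightarrow> bool" where
  "orthonormal_eigvecs M Q \<longleftrightarrow> finite Q \<and> (\<forall>q\<in>Q. q \<bullet> q = 1)
      \<and> (\<forall>q\<in>Q. \<forall>q'\<in>Q. q \<noteq> q' \<longrightarrow> q \<bullet> q' = 0)
      \<and> (\<forall>q\<in>Q. M *v q = (q \<bullet> (M *v q)) *\<^sub>R q)"

lemma orthonormal_eigvecs_inner_sum:
  assumes "orthonormal_eigvecs M Q" "q0 \<in> Q"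
  shows "q0 \<bullet> (\<Sum>q\<in>Q. f q *\<^sub>R q) = f q0"
proof -
  have "q0 \<bullet> (\<Sum>q\<in>Q. f q *\<^sub>R q) = (\<Sum>q\<in>Q. f q * (q0 \<bullet> q))"
    by (simp add: inner_sum_right)
  also have "\<dots> = f q0 * (q0 \<bullet> q0) + (\<Sum>q\<in>Q-{q0}. f q * (q0 \<bullet> q))"
    using assms unfolding orthonormal_eigvecs_def by (simp add: sum.remove)
  also have "(\<Sum>q\<in>Q-{q0}. f q * (q0 \<bullet> q)) = 0"
    using assms unfolding orthonormal_eigvecs_def by (intro sum.neutral) auto
  finally show ?thesis using assms unfolding orthonormal_eigvecs_def by auto
qed

lemma orthonormal_eigvecs_card_le:
  fixes Q :: "(real^'n) set"
  assumes "orthonormal_eigvecs M Q"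
  shows "card Q \<le> CARD('n)"
proof -
  have "independent Q"
  proof (rule pairwise_orthogonal_independent)
    show "pairwise orthogonal Q"
      using assms unfolding orthonormal_eigvecs_def pairwise_def orthogonal_def by auto
    show "0 \<notin> Q" using assms unfolding orthonormal_eigvecs_def by force
  qed
  then show ?thesis using independent_bound by fastforce
qed

lemma orthonormal_eigvecs_extend:
  fixes M :: "real^'n^'n"
  assumes sym: "sym_mat M" and Q: "orthonormal_eigvecs M Q" and span: "span Q \<noteq> UNIV"
  shows "\<exists>v. v \<notin> Q \<and> orthonormal_eigvecs M (insert v Q)"
proof -
  obtain a where a: "a \<noteq> 0" "\<forall>x\<in>span Q. a \<bullet> x = 0"
    using span_not_UNIV_orthogonal[OF span] by blast
  define W where "W = {y. \<forall>x\<in>Q. orthogonal x y}"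
  have W: "subspace W" unfolding W_def by (rule subspace_orthogonal_to_vectors)
  have "a \<in> W" using a unfolding W_def orthogonal_def by (auto simp: inner_commute dest: span_base)
  moreover have "M *v x \<in> W" if "x \<in> W" for x
  proof -
    have "q \<bullet> (M *v x) = (q \<bullet> (M *v q)) * (q \<bullet> x)" if "q \<in> Q" for q
      using sym_mat_inner[OF sym, of q x] Q that unfolding orthonormal_eigvecs_def
      by (metis inner_scaleR_left)
    then show ?thesis using \<open>x \<in> W\<close> unfolding W_def orthogonal_def by auto
  qed
  ultimately obtain v where v: "v \<in> W" "v \<bullet> v = 1" "M *v v = (v \<bullet> (M *v v)) *\<^sub>R v"
    using sym_mat_eigenvector_in_invariant_subspace[OF sym W] a(1) by blast
  have "q \<bullet> v = 0" "v \<bullet> q = 0" if "q \<in> Q" for q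
    using v(1) that unfolding W_def orthogonal_def by (auto simp: inner_commute)
  then have "v \<notin> Q" "orthonormal_eigvecs M (insert v Q)"
    using Q v(2,3) unfolding orthonormal_eigvecs_def by (auto dest: bspec[of Q])
  then show ?thesis by blast
qed

definition orthonormal_eigenbasis :: "real^'n^'n \<Rightarrow> (real^'n) set \<Rightarrow> bool" where
  "orthonormal_eigenbasis M Q \<longleftrightarrow> orthonormal_eigvecs M Q \<and> (\<forall>x. x = (\<Sum>q\<in>Q. (q \<bullet> x) *\<^sub>R q))"

text \<open>Spectral theorem: a maximal orthonormal system of eigenvectors spans, since otherwise the
  orthogonal complement of its span is invariant and contains a further eigenvector.\<close>

lemma sym_mat_has_orthonormal_eigenbasis:
  fixes M :: "real^'n^'n"
  assumes sym: "sym_mat M"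
  shows "\<exists>Q. orthonormal_eigenbasis M Q"
proof -
  define P where "P k \<longleftrightarrow> (\<exists>Q. orthonormal_eigvecs M Q \<and> card Q = k)" for k
  have P0: "P 0" unfolding P_def by (rule exI[of _ "{}"]) (simp add: orthonormal_eigvecs_def)
  have bound: "\<And>k. P k \<Longrightarrow> k \<le> CARD('n)"
    unfolding P_def using orthonormal_eigvecs_card_le by blast
  obtain Q where Q: "orthonormal_eigvecs M Q" "card Q = Greatest P"
    using GreatestI_nat[of P 0, OF P0 bound] unfolding P_def by blast
  have fin: "finite Q" using Q unfolding orthonormal_eigvecs_def by auto
  have span: "span Q = UNIV"
  proof (rule ccontr)
    assume "span Q \<noteq> UNIV"
    then obtain v where "v \<notin> Q" "orthonormal_eigvecs M (insert v Q)"
      using orthonormal_eigvecs_extend[OF sym Q(1)] by blast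
    then have "P (Greatest P + 1)" using fin Q(2) unfolding P_def by (metis Suc_eq_plus1 card_insert_disjoint)
    then show False using Greatest_le_nat[OF _ bound] by fastforce
  qed
  have expansion: "x = (\<Sum>q\<in>Q. (q \<bullet> x) *\<^sub>R q)" for x
  proof -
    define y where "y = x - (\<Sum>q\<in>Q. (q \<bullet> x) *\<^sub>R q)"
    have "orthogonal y q" if "q \<in> Q" for q
      using orthonormal_eigvecs_inner_sum[OF Q(1) that, of "\<lambda>q. q \<bullet> x"] unfolding y_def orthogonal_def
      by (simp add: inner_diff_right inner_commute)
    then have "orthogonal y y" using orthogonal_to_span[of y Q y] span by auto
    then show ?thesis unfolding y_def orthogonal_def by simp
  qed
  have "orthonormal_eigenbasis M Q"
    unfolding orthonormal_eigenbasis_def using Q(1) expansion by (intro conjI allI)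
  then show ?thesis ..
qed

context
  fixes M :: "real^'n^'n" and Q :: "(real^'n) set"
  assumes Q: "orthonormal_eigenbasis M Q"
begin

lemma eigenbasis_eigvecs: "orthonormal_eigvecs M Q"
  using Q unfolding orthonormal_eigenbasis_def by (rule conjunct1)

lemma eigenbasis_expansion: "x = (\<Sum>q\<in>Q. (q \<bullet> x) *\<^sub>R q)"
  using Q unfolding orthonormal_eigenbasis_def by (rule conjunct2[THEN spec])

lemma eigenbasis_finite: "finite Q"
  using eigenbasis_eigvecs unfolding orthonormal_eigvecs_def by (rule conjunct1)

lemma eigenbasis_nonzero: "q \<in> Q \<Longrightarrow> q \<noteq> 0"
  using eigenbasis_eigvecs unfolding orthonormal_eigvecs_def by (metis inner_zero_left zero_neq_one)

lemma eigenbasis_eigenvector: "q \<in> Q \<Longrightarrow> M *v q = (q \<bullet> (M *v q)) *\<^sub>R q"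
  using eigenbasis_eigvecs unfolding orthonormal_eigvecs_def by blast

lemma eigenbasis_inner_sum: "q0 \<in> Q \<Longrightarrow> q0 \<bullet> (\<Sum>q\<in>Q. f q *\<^sub>R q) = f q0"
  by (rule orthonormal_eigvecs_inner_sum[OF eigenbasis_eigvecs])

lemma eigenbasis_inner: "x \<bullet> y = (\<Sum>q\<in>Q. (q \<bullet> x) * (q \<bullet> y))"
proof -
  have "x \<bullet> y = (\<Sum>q\<in>Q. (q \<bullet> x) *\<^sub>R q) \<bullet> y" by (subst eigenbasis_expansion) (rule refl)
  also have "\<dots> = (\<Sum>q\<in>Q. (q \<bullet> x) * (q \<bullet> y))" by (simp add: inner_sum_left)
  finally show ?thesis .
qed

lemma eigenbasis_coeff_nonzero:
  assumes "x \<noteq> 0"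
  shows "\<exists>q\<in>Q. q \<bullet> x \<noteq> 0"
proof (rule ccontr)
  assume "\<not> ?thesis"
  then have "(\<Sum>q\<in>Q. (q \<bullet> x) *\<^sub>R q) = 0" by simp
  then show False using eigenbasis_expansion[of x] assms by argo
qed

lemma eigenbasis_matrix_vector: "M *v x = (\<Sum>q\<in>Q. ((q \<bullet> (M *v q)) * (q \<bullet> x)) *\<^sub>R q)"
proof -
  have "M *v x = M *v (\<Sum>q\<in>Q. (q \<bullet> x) *\<^sub>R q)" by (subst eigenbasis_expansion) (rule refl)
  also have "\<dots> = (\<Sum>q\<in>Q. (q \<bullet> x) *\<^sub>R (M *v q))"
    by (simp add: linear_sum[OF matrix_vector_mul_linear] matrix_vector_mult_scaleR o_def)
  also have "\<dots> = (\<Sum>q\<in>Q. ((q \<bullet> (M *v q)) * (q \<bullet> x)) *\<^sub>R q)"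
    by (intro sum.cong refl) (subst eigenbasis_eigenvector, simp_all)
  finally show ?thesis .
qed

lemma eigenbasis_coeff_matrix_vector: "q \<in> Q \<Longrightarrow> q \<bullet> (M *v x) = (q \<bullet> (M *v q)) * (q \<bullet> x)"
  by (subst eigenbasis_matrix_vector) (rule eigenbasis_inner_sum)

lemma eigenbasis_quadratic_form: "x \<bullet> (M *v x) = (\<Sum>q\<in>Q. (q \<bullet> (M *v q)) * (q \<bullet> x)\<^sup>2)"
proof -
  have "x \<bullet> (M *v x) = (\<Sum>q\<in>Q. (q \<bullet> x) * (q \<bullet> (M *v x)))" by (rule eigenbasis_inner)
  also have "\<dots> = (\<Sum>q\<in>Q. (q \<bullet> (M *v q)) * (q \<bullet> x)\<^sup>2)"
  proof (rule sum.cong[OF refl])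
    fix q assume "q \<in> Q"
    show "(q \<bullet> x) * (q \<bullet> (M *v x)) = (q \<bullet> (M *v q)) * (q \<bullet> x)\<^sup>2"
      unfolding eigenbasis_coeff_matrix_vector[OF \<open>q \<in> Q\<close>, of x] by (simp add: power2_eq_square)
  qed
  finally show ?thesis .
qed

lemma real_eigs_eigenbasis: "real_eigs M = (\<lambda>q. q \<bullet> (M *v q)) ` Q"
proof
  show "real_eigs M \<subseteq> (\<lambda>q. q \<bullet> (M *v q)) ` Q"
  proof
    fix l assume "l \<in> real_eigs M"
    then obtain v where v: "v \<noteq> 0" "M *v v = l *\<^sub>R v" unfolding real_eigs_def by blast
    obtain q where q: "q \<in> Q" "q \<bullet> v \<noteq> 0" using eigenbasis_coeff_nonzero[OF v(1)] by blast
    have "(q \<bullet> (M *v q)) * (q \<bullet> v) = q \<bullet> (M *v v)"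
      by (rule eigenbasis_coeff_matrix_vector[OF q(1), symmetric])
    also have "\<dots> = l * (q \<bullet> v)" using v(2) by simp
    finally have "l = q \<bullet> (M *v q)" using q(2) by simp
    then show "l \<in> (\<lambda>q. q \<bullet> (M *v q)) ` Q" using q(1) by blast
  qed
  show "(\<lambda>q. q \<bullet> (M *v q)) ` Q \<subseteq> real_eigs M"
  proof
    fix l assume "l \<in> (\<lambda>q. q \<bullet> (M *v q)) ` Q"
    then obtain q where "q \<in> Q" "l = q \<bullet> (M *v q)" by blast
    then show "l \<in> real_eigs M"
      unfolding real_eigs_def using eigenbasis_nonzero eigenbasis_eigenvector by auto
  qed
qed

end

lemma sym_mat_real_eigs:
  fixes M :: "real^'n^'n"
  assumes "sym_mat M"
  shows "finite (real_eigs M)" "real_eigs M \<noteq> {}"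
proof -
  obtain Q where Q: "orthonormal_eigenbasis M Q" using sym_mat_has_orthonormal_eigenbasis[OF assms] by blast
  have "Q \<noteq> {}" using eigenbasis_coeff_nonzero[OF Q, of "vec 1"] by (auto simp: vec_eq_iff)
  then show "finite (real_eigs M)" "real_eigs M \<noteq> {}"
    using real_eigs_eigenbasis[OF Q] eigenbasis_finite[OF Q] by auto
qed

lemma rq_eigenvector: "v \<noteq> 0 \<Longrightarrow> M *v v = l *\<^sub>R v \<Longrightarrow> rq M v = l"
  unfolding rq_def by simp

lemma inner_eq_rq_mult: "w \<bullet> (M *v w) = rq M w * (w \<bullet> w)"
  unfolding rq_def by (cases "w = 0") simp_all

lemma
  fixes M :: "real^'n^'n"
  assumes sym: "sym_mat M" and w: "w \<noteq> 0"
  shows lam_min_le_rq: "lam_min M \<le> rq M w"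
    and rq_le_lam_max: "rq M w \<le> lam_max M"
proof -
  obtain Q where Q: "orthonormal_eigenbasis M Q" using sym_mat_has_orthonormal_eigenbasis[OF sym] by blast
  note eigs = sym_mat_real_eigs[OF sym]
  have mu: "lam_min M \<le> q \<bullet> (M *v q)" "q \<bullet> (M *v q) \<le> lam_max M" if "q \<in> Q" for q
    using real_eigs_eigenbasis[OF Q] that eigs unfolding lam_min_def lam_max_def by auto
  have ww: "w \<bullet> w = (\<Sum>q\<in>Q. (q \<bullet> w)\<^sup>2)" using eigenbasis_inner[OF Q, of w w] by (simp add: power2_eq_square)
  have "lam_min M * (w \<bullet> w) \<le> w \<bullet> (M *v w)"
    unfolding eigenbasis_quadratic_form[OF Q, of w] ww sum_distrib_left
    using mu by (intro sum_mono mult_right_mono) auto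
  moreover have "w \<bullet> (M *v w) \<le> lam_max M * (w \<bullet> w)"
    unfolding eigenbasis_quadratic_form[OF Q, of w] ww sum_distrib_left
    using mu by (intro sum_mono mult_right_mono) auto
  ultimately show "lam_min M \<le> rq M w" "rq M w \<le> lam_max M"
    using w by (simp_all add: inner_eq_rq_mult)
qed

lemma lam_min_pos:
  fixes M :: "real^'n^'n"
  assumes "sym_mat M" "\<And>w. w \<noteq> 0 \<Longrightarrow> 0 < rq M w"
  shows "0 < lam_min M"
proof -
  have "lam_min M \<in> real_eigs M"
    unfolding lam_min_def using sym_mat_real_eigs[OF assms(1)] by (rule Min_in)
  then obtain v where "v \<noteq> 0" "M *v v = lam_min M *\<^sub>R v" unfolding real_eigs_def by blast
  then show ?thesis using assms(2)[of v] rq_eigenvector[of v M] by simp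
qed

lemma rq_add: "rq (X + Y) w = rq X w + rq Y w"
  unfolding rq_def by (simp add: matrix_vector_mult_add_rdistrib inner_add_right add_divide_distrib)

lemma rq_uminus: "rq (- X) w = - rq X w"
  unfolding rq_def by (simp add: uminus_matrix_vector)

lemma rq_shift: "w \<noteq> 0 \<Longrightarrow> rq (H - l *\<^sub>R mat 1) w = rq H w - l"
  unfolding rq_def
  by (simp add: matrix_vector_mult_diff_rdistrib scaleR_matrix_vector_assoc[symmetric] inner_diff_right
      diff_divide_distrib)

lemma rq_mult_transpose: "rq (A ** transpose A) w * (w \<bullet> w) = (transpose A *v w) \<bullet> (transpose A *v w)"
  unfolding inner_eq_rq_mult[symmetric]
  by (simp add: matrix_vector_mul_assoc[symmetric] inner_transpose_matrix_vector)

lemma rq_mult_transpose_nonneg: "0 \<le> rq (A ** transpose A) w"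
  using rq_mult_transpose[of A w] by (cases "w = 0") (simp_all add: rq_def zero_le_mult_iff)

lemma rq_pos_iff:
  assumes "w \<noteq> 0"
  shows "0 < rq M w \<longleftrightarrow> 0 < w \<bullet> (M *v w)"
proof -
  have "0 < w \<bullet> w" using assms by simp
  then show ?thesis unfolding rq_def by (simp add: pos_less_divide_eq)
qed

lemma spd_iff_rq: "spd M \<longleftrightarrow> sym_mat M \<and> (\<forall>w. w \<noteq> 0 \<longrightarrow> 0 < rq M w)"
  unfolding spd_def using rq_pos_iff by blast

lemma rq_pos: "spd M \<Longrightarrow> w \<noteq> 0 \<Longrightarrow> 0 < rq M w"
  unfolding spd_iff_rq by blast

lemma spsd_rq_nonneg: "spsd M \<Longrightarrow> 0 \<le> rq M w"
  unfolding spsd_def rq_def by simp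

section \<open>Square roots\<close>

text \<open>The square root of an SPD matrix acts on each vector of an orthonormal eigenbasis by the
  square root of the eigenvalue; existence defines it that way, uniqueness recovers it from the
  eigenvalue equation.\<close>

definition eigenbasis_matrix :: "(real^'n) set \<Rightarrow> (real^'n \<Rightarrow> real) \<Rightarrow> real^'n^'n" where
  "eigenbasis_matrix Q c = matrix (\<lambda>x. \<Sum>q\<in>Q. (c q * (q \<bullet> x)) *\<^sub>R q)"

lemma eigenbasis_matrix_apply: "eigenbasis_matrix Q c *v x = (\<Sum>q\<in>Q. (c q * (q \<bullet> x)) *\<^sub>R q)"
proof -
  have "linear (\<lambda>x. \<Sum>q\<in>Q. (c q * (q \<bullet> x)) *\<^sub>R q)"
    by (rule linearI) (simp_all add: inner_add_right distrib_left scaleR_add_left sum.distrib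
        scaleR_sum_right mult.left_commute)
  then show ?thesis unfolding eigenbasis_matrix_def by (simp add: matrix_works)
qed

lemma inner_eigenbasis_matrix:
  "orthonormal_eigenbasis M Q \<Longrightarrow> q \<in> Q \<Longrightarrow> q \<bullet> (eigenbasis_matrix Q c *v x) = c q * (q \<bullet> x)"
  unfolding eigenbasis_matrix_apply by (rule eigenbasis_inner_sum)

lemma spd_eigenbasis_matrix:
  fixes M :: "real^'n^'n"
  assumes Q: "orthonormal_eigenbasis M Q" and c: "\<And>q. q \<in> Q \<Longrightarrow> 0 < c q"
  shows "spd (eigenbasis_matrix Q c)"
proof -
  let ?S = "eigenbasis_matrix Q c"
  have xSy: "x \<bullet> (?S *v y) = (\<Sum>q\<in>Q. c q * (q \<bullet> x) * (q \<bullet> y))" for x y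
  proof -
    have "x \<bullet> (?S *v y) = (\<Sum>q\<in>Q. (q \<bullet> x) * (q \<bullet> (?S *v y)))" by (rule eigenbasis_inner[OF Q])
    also have "\<dots> = (\<Sum>q\<in>Q. c q * (q \<bullet> x) * (q \<bullet> y))"
      by (intro sum.cong refl) (simp add: inner_eigenbasis_matrix[OF Q])
    finally show ?thesis .
  qed
  have "sym_mat ?S"
    by (rule sym_matI) (simp add: xSy inner_commute[of "?S *v _"] mult_ac)
  moreover have "x \<bullet> (?S *v x) > 0" if x: "x \<noteq> 0" for x
  proof -
    obtain q0 where q0: "q0 \<in> Q" "q0 \<bullet> x \<noteq> 0" using eigenbasis_coeff_nonzero[OF Q x] by blast
    have "0 < (q0 \<bullet> x) * (q0 \<bullet> x)" using q0(2) not_real_square_gt_zero by blast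
    then have "0 < c q0 * (q0 \<bullet> x) * (q0 \<bullet> x)" using c[OF q0(1)] by (metis mult.assoc mult_pos_pos)
    also have "\<dots> \<le> (\<Sum>q\<in>Q. c q * (q \<bullet> x) * (q \<bullet> x))"
      using c eigenbasis_finite[OF Q] q0(1)
      by (intro member_le_sum)
         (auto simp: mult.assoc intro!: mult_nonneg_nonneg[OF less_imp_le zero_le_square])
    finally show ?thesis by (simp add: xSy)
  qed
  ultimately show ?thesis unfolding spd_def by blast
qed

lemma spd_sqrt_exists:
  fixes N :: "real^'n^'n"
  assumes N: "spd N"
  shows "\<exists>S. spd S \<and> S ** S = N"
proof -
  obtain Q where Q: "orthonormal_eigenbasis N Q"
    using sym_mat_has_orthonormal_eigenbasis[OF spd_sym[OF N]] by blast
  define c where "c q = sqrt (q \<bullet> (N *v q))" for q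
  have c_pos: "c q > 0" if "q \<in> Q" for q
    unfolding c_def using spd_pos[OF N eigenbasis_nonzero[OF Q that]] by simp
  define S where "S = eigenbasis_matrix Q c"
  have "(S ** S) *v x = N *v x" for x
  proof -
    have "(S ** S) *v x = S *v (S *v x)" by (simp add: matrix_vector_mul_assoc)
    also have "\<dots> = (\<Sum>q\<in>Q. (c q * (c q * (q \<bullet> x))) *\<^sub>R q)"
      unfolding S_def eigenbasis_matrix_apply[of Q c "eigenbasis_matrix Q c *v x"]
      by (intro sum.cong refl) (simp add: inner_eigenbasis_matrix[OF Q])
    also have "\<dots> = (\<Sum>q\<in>Q. ((q \<bullet> (N *v q)) * (q \<bullet> x)) *\<^sub>R q)"
      using c_pos unfolding c_def by (intro sum.cong refl) (auto simp: mult.assoc[symmetric] abs_of_pos)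
    also have "\<dots> = N *v x" by (rule eigenbasis_matrix_vector[OF Q, symmetric])
    finally show ?thesis .
  qed
  then have "S ** S = N" by (simp add: matrix_eq)
  then show ?thesis using spd_eigenbasis_matrix[of N Q c, OF Q c_pos] unfolding S_def by blast
qed

lemma spd_sqrt_eigenvector:
  fixes T :: "real^'n^'n"
  assumes T: "spd T" and q: "(T ** T) *v q = mu *\<^sub>R q" and mu: "mu \<ge> 0"
  shows "T *v q = sqrt mu *\<^sub>R q"
proof -
  define r where "r = T *v q - sqrt mu *\<^sub>R q"
  have TTq: "T *v (T *v q) = mu *\<^sub>R q" using q by (simp add: matrix_vector_mul_assoc)
  have "T *v r + sqrt mu *\<^sub>R r = T *v (T *v q) - (sqrt mu * sqrt mu) *\<^sub>R q"
    unfolding r_def by (simp add: matrix_vector_mult_diff_distrib matrix_vector_mult_scaleR scaleR_diff_right)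
  also have "\<dots> = 0" using TTq mu by simp
  finally have "r \<bullet> (T *v r + sqrt mu *\<^sub>R r) = 0" by simp
  then have "r \<bullet> (T *v r) + sqrt mu * (r \<bullet> r) = 0" by (simp add: inner_add_right)
  moreover have "0 < r \<bullet> (T *v r) + sqrt mu * (r \<bullet> r)" if "r \<noteq> 0"
    using spd_pos[OF T that] mu by (simp add: add_pos_nonneg)
  ultimately have "r = 0" by (cases "r = 0") simp_all
  then show ?thesis unfolding r_def by simp
qed

lemma spd_sqrt_unique:
  fixes S T :: "real^'n^'n"
  assumes S: "spd S" and T: "spd T" and eq: "S ** S = T ** T"
  shows "S = T"
proof -
  have "sym_mat (S ** S)" using spd_sym[OF S] unfolding sym_mat_def by (simp add: matrix_transpose_mul)
  then obtain Q where Q: "orthonormal_eigenbasis (S ** S) Q"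
    using sym_mat_has_orthonormal_eigenbasis by blast
  have Sq: "S *v q = T *v q" if "q \<in> Q" for q
  proof -
    define mu where "mu = q \<bullet> ((S ** S) *v q)"
    have "mu = (S *v q) \<bullet> (S *v q)"
      unfolding mu_def matrix_vector_mul_assoc[symmetric] by (rule sym_mat_inner[OF spd_sym[OF S]])
    then have mu: "mu \<ge> 0" by simp
    have SSq: "(S ** S) *v q = mu *\<^sub>R q" unfolding mu_def by (rule eigenbasis_eigenvector[OF Q that])
    then have TTq: "(T ** T) *v q = mu *\<^sub>R q" by (simp only: eq)
    show ?thesis unfolding spd_sqrt_eigenvector[OF S SSq mu] spd_sqrt_eigenvector[OF T TTq mu] ..
  qed
  have "S *v x = T *v x" for x
  proof -
    have "S *v x = (\<Sum>q\<in>Q. (q \<bullet> x) *\<^sub>R (S *v q))"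
      by (subst eigenbasis_expansion[OF Q, of x])
         (simp add: linear_sum[OF matrix_vector_mul_linear] matrix_vector_mult_scaleR o_def)
    also have "\<dots> = (\<Sum>q\<in>Q. (q \<bullet> x) *\<^sub>R (T *v q))" using Sq by simp
    also have "\<dots> = T *v x"
      by (subst (2) eigenbasis_expansion[OF Q, of x])
         (simp add: linear_sum[OF matrix_vector_mul_linear] matrix_vector_mult_scaleR o_def)
    finally show ?thesis .
  qed
  then show ?thesis by (simp add: matrix_eq)
qed

lemma
  fixes M :: "real^'n^'n"
  assumes "spd M"
  shows spd_inv_sqrt: "spd (inv_sqrt M)"
    and inv_sqrt_square: "inv_sqrt M ** inv_sqrt M = matrix_inv M"
proof -
  obtain S where S: "spd S" "S ** S = matrix_inv M"
    using spd_sqrt_exists[OF spd_matrix_inv[OF assms]] by blast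
  have "\<exists>!S. spd S \<and> S ** S = matrix_inv M"
  proof (rule ex1I[of _ S])
    show "spd S \<and> S ** S = matrix_inv M" using S by blast
    show "T = S" if "spd T \<and> T ** T = matrix_inv M" for T
      using spd_sqrt_unique[of T S] that S by simp
  qed
  then have "spd (inv_sqrt M) \<and> inv_sqrt M ** inv_sqrt M = matrix_inv M"
    unfolding inv_sqrt_def by (rule theI')
  then show "spd (inv_sqrt M)" "inv_sqrt M ** inv_sqrt M = matrix_inv M" by auto
qed

lemma congruence_quadratic_form:
  fixes G S :: "real^'n^'n"
  assumes "sym_mat S"
  shows "w \<bullet> ((S ** G ** S) *v w) = (S *v w) \<bullet> (G *v (S *v w))"
  using sym_mat_inner[OF assms, of w "G *v (S *v w)"] by (simp add: matrix_vector_mul_assoc matrix_mul_assoc)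

lemma spd_congruence:
  fixes G S :: "real^'n^'n"
  assumes G: "spd G" and S: "sym_mat S" "invertible S"
  shows "spd (S ** G ** S)"
  unfolding spd_def congruence_quadratic_form[OF S(1)]
  using spd_pos[OF G] sym_mat_congruence[OF spd_sym[OF G] S(1)] invertible_mult_vec_eq_0_iff[OF S(2)] by blast

lemma spsd_congruence:
  fixes G S :: "real^'n^'n"
  assumes G: "spsd G" and S: "sym_mat S"
  shows "spsd (S ** G ** S)"
  using G sym_mat_congruence[OF _ S, of G] unfolding spsd_def congruence_quadratic_form[OF S] by blast

lemma
  fixes M :: "real^'n^'n"
  assumes "spd M"
  shows sym_inv_sqrt: "sym_mat (inv_sqrt M)"
    and invertible_inv_sqrt: "invertible (inv_sqrt M)"
    and inv_sqrt_congruence: "inv_sqrt M ** M ** inv_sqrt M = mat 1"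
proof -
  let ?S = "inv_sqrt M"
  show sym: "sym_mat ?S" and inv: "invertible ?S"
    using spd_inv_sqrt[OF assms] spd_sym spd_invertible by blast+
  have "?S ** ?S ** M = mat 1"
    using inv_sqrt_square[OF assms] matrix_inv_left[OF spd_invertible[OF assms]] by simp
  then have "?S ** M = matrix_inv ?S" using matrix_inv_unique by (metis matrix_mul_assoc)
  then show "?S ** M ** ?S = mat 1" using matrix_inv_left[OF inv] by simp
qed

lemma transpose_inv_sqrt_congruence:
  fixes B :: "real^'n^'m" and H1 :: "real^'n^'n" and H2 :: "real^'m^'m"
  assumes "spd H1" "spd H2"
  shows "transpose (inv_sqrt H2 ** B ** inv_sqrt H1) = inv_sqrt H1 ** transpose B ** inv_sqrt H2"
  using sym_inv_sqrt[OF assms(1)] sym_inv_sqrt[OF assms(2)] unfolding sym_mat_def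
  by (simp add: matrix_transpose_mul matrix_mul_assoc)

lemma inv_sqrt_congruence_mult_vec: "spd H \<Longrightarrow> inv_sqrt H *v (H *v (inv_sqrt H *v w)) = w"
  using inv_sqrt_congruence[of H] by (simp add: matrix_vector_mul_assoc matrix_mul_assoc)

text \<open>The witness is \<open>w = N\<^sup>-\<^sup>1\<^sup>/\<^sup>2 u\<close>: then \<open>w \<bullet> N w = u \<bullet> u\<close> and \<open>w \<bullet> w = u \<bullet> N\<^sup>-\<^sup>1 u\<close>.\<close>

lemma spd_rq_inverse:
  fixes N :: "real^'n^'n"
  assumes N: "spd N" and u: "u \<noteq> 0"
  shows "\<exists>w. w \<noteq> 0 \<and> rq N w * (u \<bullet> (matrix_inv N *v u)) = u \<bullet> u"
proof -
  define S where "S = inv_sqrt N"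
  have sym: "sym_mat S" and inv: "invertible S" using sym_inv_sqrt[OF N] invertible_inv_sqrt[OF N]
    unfolding S_def by blast+
  define w where "w = S *v u"
  have w: "w \<noteq> 0" unfolding w_def using invertible_mult_vec_eq_0_iff[OF inv] u by blast
  have "w \<bullet> (N *v w) = u \<bullet> ((S ** N ** S) *v u)"
    unfolding w_def congruence_quadratic_form[OF sym] ..
  also have "\<dots> = u \<bullet> u" using inv_sqrt_congruence[OF N] unfolding S_def by simp
  finally have "rq N w * (w \<bullet> w) = u \<bullet> u" by (simp add: inner_eq_rq_mult)
  moreover have "w \<bullet> w = u \<bullet> (matrix_inv N *v u)"
    using sym_mat_inner[OF sym, of u "S *v u"] inv_sqrt_square[OF N]
    unfolding w_def S_def by (simp add: matrix_vector_mul_assoc)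
  ultimately show ?thesis using w by metis
qed

lemma real_eigs_similar:
  fixes M P :: "real^'n^'n"
  assumes P: "invertible P"
  shows "real_eigs (matrix_inv P ** M ** P) = real_eigs M"
proof
  show "real_eigs (matrix_inv P ** M ** P) \<subseteq> real_eigs M"
  proof
    fix l assume "l \<in> real_eigs (matrix_inv P ** M ** P)"
    then obtain w where w: "w \<noteq> 0" "(matrix_inv P ** M ** P) *v w = l *\<^sub>R w"
      unfolding real_eigs_def by blast
    have "M *v (P *v w) = P *v ((matrix_inv P ** M ** P) *v w)"
      by (simp add: matrix_vector_mul_assoc[symmetric] matrix_inv_cancel_right[OF P])
    then have "M *v (P *v w) = l *\<^sub>R (P *v w)" using w(2) by (simp add: matrix_vector_mult_scaleR)
    moreover have "P *v w \<noteq> 0" using w(1) invertible_mult_vec_eq_0_iff[OF P] by blast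
    ultimately show "l \<in> real_eigs M" unfolding real_eigs_def by blast
  qed
  show "real_eigs M \<subseteq> real_eigs (matrix_inv P ** M ** P)"
  proof
    fix l assume "l \<in> real_eigs M"
    then obtain v where v: "v \<noteq> 0" "M *v v = l *\<^sub>R v" unfolding real_eigs_def by blast
    have "(matrix_inv P ** M ** P) *v (matrix_inv P *v v) = l *\<^sub>R (matrix_inv P *v v)"
      using v(2) by (simp add: matrix_vector_mul_assoc[symmetric] matrix_inv_cancel_right[OF P]
          matrix_vector_mult_scaleR)
    moreover have "matrix_inv P *v v \<noteq> 0"
      using v(1) matrix_inv_cancel_right[OF P, of v] by auto
    ultimately show "l \<in> real_eigs (matrix_inv P ** M ** P)" unfolding real_eigs_def by blast
  qed
qed

lemma real_eigs_inv_sqrt_congruence: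
  fixes G H :: "real^'n^'n"
  assumes H: "spd H"
  shows "real_eigs (matrix_inv H ** G) = real_eigs (inv_sqrt H ** G ** inv_sqrt H)"
proof -
  let ?S = "inv_sqrt H"
  have "inv_sqrt H ** G ** inv_sqrt H = matrix_inv ?S ** (matrix_inv H ** G) ** ?S"
    using matrix_inv_left[OF invertible_inv_sqrt[OF H]]
    by (simp add: inv_sqrt_square[OF H, symmetric] matrix_mul_assoc)
  then show ?thesis using real_eigs_similar[OF invertible_inv_sqrt[OF H]] by simp
qed

lemma
  fixes G H :: "real^'n^'n"
  assumes H: "spd H" and G: "sym_mat G" and w: "w \<noteq> 0"
  shows lam_min_le_rq_inv_sqrt_congruence:
      "lam_min (matrix_inv H ** G) \<le> rq (inv_sqrt H ** G ** inv_sqrt H) w"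
    and rq_inv_sqrt_congruence_le_lam_max:
      "rq (inv_sqrt H ** G ** inv_sqrt H) w \<le> lam_max (matrix_inv H ** G)"
  using lam_min_le_rq[OF _ w] rq_le_lam_max[OF _ w] sym_mat_congruence[OF G sym_inv_sqrt[OF H]]
  unfolding lam_min_def lam_max_def real_eigs_inv_sqrt_congruence[OF H] by blast+

lemma inv_sqrt_congruence_schur:
  fixes A :: "real^'n^'n" and S D :: "real^'m^'m" and B :: "real^'n^'m"
  assumes A: "spd A" and S: "spd S"
  shows "inv_sqrt S ** (D + B ** matrix_inv A ** transpose B) ** inv_sqrt S
       = inv_sqrt S ** D ** inv_sqrt S
         + (inv_sqrt S ** B ** inv_sqrt A) ** transpose (inv_sqrt S ** B ** inv_sqrt A)"
  unfolding transpose_inv_sqrt_congruence[OF A S] inv_sqrt_square[OF A, symmetric]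
  by (simp add: matrix_eq matrix_vector_mul_assoc[symmetric] matrix_vector_mult_add_rdistrib
      matrix_vector_right_distrib)

definition definite :: "real^'n^'n \<Rightarrow> bool" where
  "definite T \<longleftrightarrow> (\<forall>w. w \<noteq> 0 \<longrightarrow> 0 < rq T w) \<or> (\<forall>w. w \<noteq> 0 \<longrightarrow> rq T w < 0)"

lemma definite_invertible:
  fixes T :: "real^'n^'n"
  assumes "definite T"
  shows "invertible T"
proof (rule invertibleI_kernel)
  fix x assume "T *v x = 0"
  then have "rq T x = 0" unfolding rq_def by simp
  then show "x = 0" using assms unfolding definite_def by force
qed

lemma definite_rq_inverse:
  fixes T :: "real^'n^'n"
  assumes sym: "sym_mat T" and def: "definite T" and u: "u \<noteq> 0"
  shows "\<exists>w. w \<noteq> 0 \<and> rq T w * (u \<bullet> (matrix_inv T *v u)) = u \<bullet> u"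
proof (cases "\<forall>w. w \<noteq> 0 \<longrightarrow> 0 < rq T w")
  case True
  then show ?thesis using spd_rq_inverse[OF _ u] sym unfolding spd_iff_rq by blast
next
  case False
  then have "spd (- T)"
    using def sym_mat_uminus[OF sym] unfolding definite_def spd_iff_rq by (auto simp: rq_uminus)
  from spd_rq_inverse[OF this u] show ?thesis
    by (simp add: rq_uminus matrix_inv_uminus[OF definite_invertible[OF def]] uminus_matrix_vector)
qed

lemma inner_inverse_nonpos:
  fixes T :: "real^'n^'n"
  assumes neg: "\<And>w. w \<noteq> 0 \<Longrightarrow> rq T w < 0"
  shows "u \<bullet> (matrix_inv T *v u) \<le> 0"
proof -
  have inv: "invertible T" using neg definite_invertible unfolding definite_def by blast
  define y where "y = matrix_inv T *v u"
  have "u \<bullet> (matrix_inv T *v u) = rq T y * (y \<bullet> y)"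
    unfolding inner_matrix_inv[OF inv] inner_eq_rq_mult[symmetric] y_def ..
  also have "\<dots> \<le> 0" using neg[of y] by (cases "y = 0") (auto simp: mult_nonpos_nonneg)
  finally show ?thesis .
qed

lemma definite_shift:
  assumes "\<And>w. w \<noteq> 0 \<Longrightarrow> a \<le> rq H w \<and> rq H w \<le> b" and "l < a \<or> b < l"
  shows "definite (H - l *\<^sub>R mat 1)"
  using assms unfolding definite_def by (smt (verit) rq_shift)

text \<open>By \<open>definite_rq_inverse\<close>, \<open>v \<bullet> T\<^sup>-\<^sup>1 v\<close> is \<open>v \<bullet> v\<close> divided by a Rayleigh quotient
  of \<open>T = H - l\<close>, which lies between \<open>a - l\<close> and \<open>b - l\<close>.\<close>

lemma inner_inverse_shift_ge:
  fixes H :: "real^'n^'n"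
  assumes sym: "sym_mat H" and range: "\<And>w. w \<noteq> 0 \<Longrightarrow> a \<le> rq H w \<and> rq H w \<le> b"
    and l: "l < a \<or> b < l"
  shows "(v \<bullet> v) / (b - l) \<le> v \<bullet> (matrix_inv (H - l *\<^sub>R mat 1) *v v)"
proof (cases "v = 0")
  case False
  let ?T = "H - l *\<^sub>R mat 1"
  obtain w where w: "w \<noteq> 0" "rq ?T w * (v \<bullet> (matrix_inv ?T *v v)) = v \<bullet> v"
    using definite_rq_inverse[OF sym_mat_shift[OF sym] definite_shift[OF range l] False] by blast
  have r: "rq ?T w \<le> b - l" "0 < (b - l) * rq ?T w"
    using range[OF w(1)] l rq_shift[OF w(1)] by (auto intro: mult_pos_pos mult_neg_neg)
  then have "(v \<bullet> v) / (b - l) \<le> (v \<bullet> v) / rq ?T w"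
    by (intro divide_left_mono) simp_all
  also have "\<dots> = v \<bullet> (matrix_inv ?T *v v)"
    using w(2) r(2) by (metis mult_eq_0_iff nonzero_mult_div_cancel_left order_less_irrefl)
  finally show ?thesis .
qed simp

section \<open>The characteristic cubic\<close>

definition char_cubic :: "real \<Rightarrow> real \<Rightarrow> real \<Rightarrow> real \<Rightarrow> real \<Rightarrow> real \<Rightarrow> real" where
  "char_cubic gA gR gD gK gE l =
     l ^ 3 - (gA + (gR + gD) + (gK + gE)) * l ^ 2
     + (gA * (gK + gE) + gK + gE * (gR + gD) + gD * gA + gR) * l
     - (gA * gK + gE * gA * gD + gE * gR)"

lemma char_cubic_factored:
  "char_cubic gA gR gD gK gE l = (l - gA) * (l - gD) * (l - gE) - (l - 1) * (gR * (l - gE) + gK * (l - gA))"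
  unfolding char_cubic_def by (simp add: algebra_simps power3_eq_cube power2_eq_square)

lemma char_cubic_root_le:
  fixes l gA gR gD gK gE :: real
  assumes pos: "0 < gA" "0 \<le> gR" "0 \<le> gD" "0 \<le> gK" "0 < gE"
    and root: "char_cubic gA gR gD gK gE l = 0"
  shows "l \<le> gA + (gR + gD) + (gK + gE)"
proof (rule ccontr)
  define s where "s = gA + (gR + gD) + (gK + gE)"
  define c1 where "c1 = gA * (gK + gE) + gK + gE * (gR + gD) + gD * gA + gR"
  define c0 where "c0 = gA * gK + gE * gA * gD + gE * gR"
  assume "\<not> ?thesis"
  then have ls: "s < l" unfolding s_def by simp
  have s: "0 < s" unfolding s_def using pos by linarith
  have "c1 * s - c0 = gA * (gK + gE) * s + gK * (s - gA) + gE * ((gR + gD) * s - gD * gA)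
      + gD * gA * s + gR * (s - gE)"
    unfolding c1_def c0_def by (simp add: algebra_simps)
  also have "\<dots> \<ge> 0"
  proof -
    have "gD * gA \<le> (gR + gD) * s"
      using pos unfolding s_def by (intro mult_mono) auto
    then show ?thesis using pos s unfolding s_def by (simp add: add_nonneg_nonneg)
  qed
  finally have "c0 \<le> c1 * s" by simp
  also have "c1 * s \<le> c1 * l"
    using ls pos unfolding c1_def by (intro mult_left_mono) auto
  moreover have "0 < l\<^sup>2 * (l - s)" using ls s by simp
  ultimately have "0 < l\<^sup>2 * (l - s) + c1 * l - c0" by linarith
  moreover have "l\<^sup>2 * (l - s) + c1 * l - c0 = 0"
    using root unfolding char_cubic_def s_def c1_def c0_def by (simp add: algebra_simps power2_eq_square power3_eq_cube)
  ultimately show False by simp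
qed

lemma char_cubic_vanishes:
  fixes l gA gR gD gK gE W Z beta mu nu :: real
  assumes W: "0 < W" and Z: "0 < Z"
    and beta: "(gA - l) * beta = gR * W" and mu: "mu = (l - 1) * beta / W + l - gD"
    and nu: "mu * nu = gK * Z" and gE: "(l - 1) * nu = Z * (l - gE)"
  shows "char_cubic gA gR gD gK gE l = 0"
proof -
  have "((l - 1) * gK) * Z = (mu * (l - gE)) * Z"
    using nu gE by (metis mult.assoc mult.commute)
  then have K: "(l - 1) * gK = mu * (l - gE)" using Z by simp
  have "mu * (gA - l) = (l - 1) * ((gA - l) * beta) / W + (l - gD) * (gA - l)"
    unfolding mu using W by (simp add: field_simps)
  then have M: "mu * (gA - l) = (l - 1) * gR + (l - gD) * (gA - l)"
    unfolding beta using W by simp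
  have "(l - 1) * gK * (gA - l) = ((l - 1) * gR + (l - gD) * (gA - l)) * (l - gE)"
    using K M by (metis mult.commute mult.left_commute)
  then show ?thesis unfolding char_cubic_factored by (simp add: algebra_simps)
qed

lemma schur_rq_bound_above:
  fixes l a s gR gD :: real
  assumes "a + s < l" "gR + gD \<le> s" "1 \<le> a" "0 \<le> gR" "0 \<le> gD"
  shows "0 < l - gD + (l - 1) * gR / (a - l)"
proof -
  have la: "0 < l - a" using assms by linarith
  have "0 < l * (l - a - gD - gR) + gD * a + gR"
    using assms by (intro add_pos_nonneg mult_pos_pos) auto
  also have "\<dots> = (l - gD + (l - 1) * gR / (a - l)) * (l - a)"
    using la by (simp add: field_simps)
  finally show ?thesis using la by (simp add: zero_less_mult_iff)
qed

lemma schur_rq_bound_below: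
  fixes l a rmin dmax gR gD :: real
  assumes "l < rmin / (a + rmin + dmax)" "l < a" "1 \<le> a" "rmin \<le> gR" "0 < rmin" "0 \<le> gD" "gD \<le> dmax"
  shows "l - gD + (l - 1) * gR / (a - l) < 0"
proof -
  have al: "0 < a - l" using assms by linarith
  have "l * (a + gD + gR) < gR"
  proof (cases "l \<le> 0")
    case True
    then show ?thesis using assms by (smt (verit) mult_nonpos_nonneg)
  next
    case False
    have "rmin * (a + gD + gR) \<le> gR * (a + rmin + dmax)"
      using assms by (simp add: algebra_simps mult_right_mono mult_mono add_mono)
    then have "rmin / (a + rmin + dmax) \<le> gR / (a + gD + gR)"
      using assms by (simp add: field_simps)
    then have "l < gR / (a + gD + gR)" using assms(1) by linarith
    then show ?thesis using assms by (simp add: pos_less_divide_eq)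
  qed
  moreover have "(l - gD + (l - 1) * gR / (a - l)) * (a - l) = (l * (a + gD + gR) - gR) - l\<^sup>2 - gD * a"
    using al by (simp add: field_simps power2_eq_square)
  moreover have "0 \<le> gD * a" using assms by simp
  ultimately have "(l - gD + (l - 1) * gR / (a - l)) * (a - l) < 0"
    by (smt (verit) zero_le_power2)
  then show ?thesis using al by (simp add: mult_less_0_iff)
qed

section \<open>The scaled system\<close>

text \<open>The
  spectral constants enter only through bounds on Rayleigh quotients: \<open>amin, amax\<close> are
  \<open>\<gamma>\<^sup>A\<^sub>m\<^sub>i\<^sub>n, \<gamma>\<^sup>A\<^sub>m\<^sub>a\<^sub>x\<close>, and \<open>rmin, dmax, smax, emin, xmax\<close> are
  \<open>\<gamma>\<^sup>R\<^sub>m\<^sub>i\<^sub>n, \<gamma>\<^sup>D\<^sub>m\<^sub>a\<^sub>x, \<gamma>\<^sup>S\<^sub>m\<^sub>a\<^sub>x, \<gamma>\<^sup>E\<^sub>m\<^sub>i\<^sub>n, \<gamma>\<^sup>X\<^sub>m\<^sub>a\<^sub>x\<close>.\<close>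

locale scaled_block_system =
  fixes Ab :: "real^'n^'n" and R :: "real^'n^'m" and Db :: "real^'m^'m"
    and K :: "real^'m^'p" and Eb :: "real^'p^'p"
    and amin amax rmin dmax smax emin xmax :: real
  assumes Ab: "spd Ab" and Db: "spsd Db" and Eb: "spd Eb"
    and rq_Ab: "\<And>w. w \<noteq> 0 \<Longrightarrow> amin \<le> rq Ab w \<and> rq Ab w \<le> amax"
    and rq_RRt: "\<And>w. w \<noteq> 0 \<Longrightarrow> rmin \<le> rq (R ** transpose R) w"
    and rmin_pos: "0 < rmin"
    and rq_Db: "\<And>w. w \<noteq> 0 \<Longrightarrow> rq Db w \<le> dmax"
    and rq_S: "\<And>w. w \<noteq> 0 \<Longrightarrow> rq (R ** transpose R) w + rq Db w \<le> smax"
    and rq_Eb: "\<And>w. w \<noteq> 0 \<Longrightarrow> emin \<le> rq Eb w"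
    and rq_X: "\<And>w. w \<noteq> 0 \<Longrightarrow> rq (K ** transpose K) w + rq Eb w \<le> xmax"
    and one_between: "amin \<le> 1" "1 \<le> amax"
begin

lemma sym_Ab: "sym_mat Ab"
  using Ab by (rule spd_sym)

lemma sym_Db: "sym_mat Db"
  using Db unfolding spsd_def by blast

lemma transpose_R_nonzero: "w \<noteq> 0 \<Longrightarrow> transpose R *v w \<noteq> 0"
  using rq_mult_transpose[of R w] rq_RRt[of w] rmin_pos by auto

lemma smax_pos: "0 < smax"
proof -
  have "(vec 1 :: real^'m) \<noteq> 0" by (simp add: vec_eq_iff)
  then show ?thesis
    using rq_S rq_RRt rmin_pos spsd_rq_nonneg[OF Db, of "vec 1"] by fastforce
qed

lemma xmax_pos: "0 < xmax"
proof -
  have "(vec 1 :: real^'p) \<noteq> 0" by (simp add: vec_eq_iff)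
  then show ?thesis
    using rq_X rq_pos[OF Eb] rq_mult_transpose_nonneg[of K "vec 1"] by fastforce
qed

lemma outside_cases:
  assumes "l \<notin> {min amin (rmin / (amax + rmin + dmax)) .. amax + smax}"
  obtains "amax + smax < l" | "l < amin" "l < rmin / (amax + rmin + dmax)"
  using assms by force

definition schur :: "real \<Rightarrow> real^'m^'m" where
  "schur l = (l - 1) *\<^sub>R (R ** matrix_inv (Ab - l *\<^sub>R mat 1) ** transpose R) + l *\<^sub>R mat 1 - Db"

lemma inner_schur:
  "x \<bullet> (schur l *v y)
     = (l - 1) * ((transpose R *v x) \<bullet> (matrix_inv (Ab - l *\<^sub>R mat 1) *v (transpose R *v y)))
       + l * (x \<bullet> y) - x \<bullet> (Db *v y)"
  unfolding schur_def
  by (simp add: matrix_vector_mult_diff_rdistrib matrix_vector_mult_add_rdistrib inner_diff_right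
      inner_add_right scaleR_matrix_vector_assoc[symmetric] matrix_vector_mul_assoc[symmetric]
      inner_transpose_matrix_vector)

lemma sym_schur:
  assumes "l < amin \<or> amax < l"
  shows "sym_mat (schur l)"
proof (rule sym_matI)
  let ?Ti = "matrix_inv (Ab - l *\<^sub>R mat 1)"
  have "sym_mat ?Ti"
    using sym_mat_matrix_inv[OF sym_mat_shift[OF sym_Ab] definite_invertible[OF definite_shift[OF rq_Ab assms]]] .
  then show "x \<bullet> (schur l *v y) = (schur l *v x) \<bullet> y" for x y
    unfolding inner_commute[of "schur l *v x"] inner_schur
    using sym_mat_inner[OF sym_Db, of x y] sym_mat_inner[of ?Ti "transpose R *v x" "transpose R *v y"]
    by (simp add: inner_commute)
qed

lemma rq_schur:
  assumes "w \<noteq> 0"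
  shows "rq (schur l) w
    = (l - 1) * ((transpose R *v w) \<bullet> (matrix_inv (Ab - l *\<^sub>R mat 1) *v (transpose R *v w))) / (w \<bullet> w)
      + l - rq Db w"
  using assms unfolding rq_def inner_schur by (simp add: field_simps)

text \<open>Both bounds come from the estimate of the inverse of the shifted block by the Rayleigh quotients
  of \<open>R R\<^sup>T\<close>, with the sign of \<open>l - 1\<close> deciding in which direction it is used.\<close>

lemma rq_schur_pos:
  assumes l: "amax + smax < l" and w: "w \<noteq> 0"
  shows "0 < rq (schur l) w"
proof -
  define v where "v = transpose R *v w"
  define gR where "gR = rq (R ** transpose R) w"
  have amax: "amax < l" using l smax_pos by linarith
  have "v \<bullet> v / (amax - l) \<le> v \<bullet> (matrix_inv (Ab - l *\<^sub>R mat 1) *v v)"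
    using inner_inverse_shift_ge[OF sym_Ab rq_Ab] amax by blast
  then have "(l - 1) * (gR * (w \<bullet> w) / (amax - l)) \<le> (l - 1) * (v \<bullet> (matrix_inv (Ab - l *\<^sub>R mat 1) *v v))"
    using one_between amax rq_mult_transpose[of R w] unfolding v_def gR_def
    by (intro mult_left_mono) auto
  then have "l - rq Db w + (l - 1) * gR / (amax - l) \<le> rq (schur l) w"
    unfolding rq_schur[OF w] v_def using w by (simp add: divide_right_mono field_simps)
  moreover have "0 < l - rq Db w + (l - 1) * gR / (amax - l)"
    using l rq_S[OF w] one_between rq_mult_transpose_nonneg spsd_rq_nonneg[OF Db] unfolding gR_def
    by (intro schur_rq_bound_above) auto
  ultimately show ?thesis by linarith
qed

lemma rq_schur_neg:
  assumes l: "l < amin" "l < rmin / (amax + rmin + dmax)" and w: "w \<noteq> 0"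
  shows "rq (schur l) w < 0"
proof -
  define v where "v = transpose R *v w"
  define gR where "gR = rq (R ** transpose R) w"
  have "v \<bullet> v / (amax - l) \<le> v \<bullet> (matrix_inv (Ab - l *\<^sub>R mat 1) *v v)"
    using inner_inverse_shift_ge[OF sym_Ab rq_Ab] l by blast
  then have "(l - 1) * (v \<bullet> (matrix_inv (Ab - l *\<^sub>R mat 1) *v v)) \<le> (l - 1) * (gR * (w \<bullet> w) / (amax - l))"
    using one_between l rq_mult_transpose[of R w] unfolding v_def gR_def
    by (intro mult_left_mono_neg) auto
  then have "rq (schur l) w \<le> l - rq Db w + (l - 1) * gR / (amax - l)"
    unfolding rq_schur[OF w] v_def using w by (simp add: divide_right_mono field_simps)
  moreover have "l - rq Db w + (l - 1) * gR / (amax - l) < 0"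
    using l one_between rq_RRt[OF w] rmin_pos spsd_rq_nonneg[OF Db] rq_Db[OF w] unfolding gR_def
    by (intro schur_rq_bound_below) auto
  ultimately show ?thesis by linarith
qed

lemma schur_definite:
  assumes "l \<notin> {min amin (rmin / (amax + rmin + dmax)) .. amax + smax}"
  shows "definite (schur l)"
  using assms by (cases rule: outside_cases) (auto simp: definite_def intro: rq_schur_pos rq_schur_neg)

context
  fixes l :: real and xb :: "real^'n" and yb :: "real^'m" and zb :: "real^'p"
  assumes e1: "Ab *v xb - l *\<^sub>R xb = (l - 1) *\<^sub>R (transpose R *v yb)"
    and e2: "R *v xb - Db *v yb + l *\<^sub>R yb = (l - 1) *\<^sub>R (transpose K *v zb)"
    and e3: "K *v yb + Eb *v zb = l *\<^sub>R zb"
    and nonzero: "xb \<noteq> 0 \<or> yb \<noteq> 0 \<or> zb \<noteq> 0"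
    and outside: "l \<notin> {min amin (rmin / (amax + rmin + dmax)) .. amax + smax}"
begin

lemma outside_Ab_range: "l < amin \<or> amax < l"
  using outside smax_pos by (cases rule: outside_cases) auto

lemma invertible_shifted_Ab: "invertible (Ab - l *\<^sub>R mat 1)"
  using definite_invertible[OF definite_shift[OF rq_Ab outside_Ab_range]] .

lemma invertible_schur: "invertible (schur l)"
  using definite_invertible[OF schur_definite[OF outside]] .

lemma upper_block_eq: "xb = (l - 1) *\<^sub>R (matrix_inv (Ab - l *\<^sub>R mat 1) *v (transpose R *v yb))"
proof -
  have "(Ab - l *\<^sub>R mat 1) *v xb = (l - 1) *\<^sub>R (transpose R *v yb)"
    using e1 by (simp add: matrix_vector_mult_diff_rdistrib scaleR_matrix_vector_assoc[symmetric])
  then show ?thesis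
    using matrix_inv_cancel_left[OF invertible_shifted_Ab, of xb] by (simp add: matrix_vector_mult_scaleR)
qed

lemma middle_block_eq: "yb = (l - 1) *\<^sub>R (matrix_inv (schur l) *v (transpose K *v zb))"
proof -
  have "schur l *v yb = (l - 1) *\<^sub>R (transpose K *v zb)"
    using e2 upper_block_eq unfolding schur_def
    by (simp add: matrix_vector_mult_diff_rdistrib matrix_vector_mult_add_rdistrib
        scaleR_matrix_vector_assoc[symmetric] matrix_vector_mul_assoc[symmetric]
        matrix_vector_mult_scaleR algebra_simps)
  then show ?thesis
    using matrix_inv_cancel_left[OF invertible_schur, of yb] by (simp add: matrix_vector_mult_scaleR)
qed

lemma z_nonzero: "zb \<noteq> 0"
  using nonzero upper_block_eq middle_block_eq by auto

text \<open>Testing the third block equation against \<open>zb\<close> eliminates \<open>yb\<close>.\<close>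

lemma third_block_identity:
  defines "u \<equiv> transpose K *v zb"
  shows "(l - 1) * (u \<bullet> (matrix_inv (schur l) *v u)) = (zb \<bullet> zb) * (l - rq Eb zb)"
proof -
  have "zb \<bullet> (K *v yb) = (l - 1) * (u \<bullet> (matrix_inv (schur l) *v u))"
    unfolding u_def inner_transpose_matrix_vector[of zb K] by (subst middle_block_eq) simp
  moreover have "zb \<bullet> (K *v yb) + rq Eb zb * (zb \<bullet> zb) = l * (zb \<bullet> zb)"
    using arg_cong[OF e3, of "inner zb"] by (simp add: inner_add_right inner_eq_rq_mult)
  ultimately show ?thesis by (simp add: algebra_simps)
qed

lemma char_cubic_exists:
  "\<exists>w1 w2. w1 \<noteq> 0 \<and> w2 \<noteq> 0 \<and>
     char_cubic (rq Ab w1) (rq (R ** transpose R) w2) (rq Db w2) (rq (K ** transpose K) zb) (rq Eb zb) l = 0"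
proof -
  define u where "u = transpose K *v zb"
  define nu where "nu = u \<bullet> (matrix_inv (schur l) *v u)"
  have Z: "0 < zb \<bullet> zb" using z_nonzero by simp
  have uu: "u \<bullet> u = rq (K ** transpose K) zb * (zb \<bullet> zb)"
    unfolding u_def by (rule rq_mult_transpose[symmetric])
  have nu: "(l - 1) * nu = (zb \<bullet> zb) * (l - rq Eb zb)"
    unfolding nu_def u_def by (rule third_block_identity)
  show ?thesis
  proof (cases "u = 0")
    case True
    then have "rq (K ** transpose K) zb = 0" "l = rq Eb zb"
      using uu nu Z unfolding nu_def by simp_all
    moreover have "(vec 1 :: real^'n) \<noteq> 0" "(vec 1 :: real^'m) \<noteq> 0" by (simp_all add: vec_eq_iff)
    ultimately show ?thesis unfolding char_cubic_factored by auto
  next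
    case False
    obtain w2 where w2: "w2 \<noteq> 0" "rq (schur l) w2 * nu = u \<bullet> u"
      using definite_rq_inverse[OF sym_schur[OF outside_Ab_range] schur_definite[OF outside] False]
      unfolding nu_def by blast
    define v where "v = transpose R *v w2"
    obtain w1 where w1: "w1 \<noteq> 0" "rq (Ab - l *\<^sub>R mat 1) w1 * (v \<bullet> (matrix_inv (Ab - l *\<^sub>R mat 1) *v v)) = v \<bullet> v"
      using definite_rq_inverse[OF sym_mat_shift[OF sym_Ab] definite_shift[OF rq_Ab outside_Ab_range]]
        transpose_R_nonzero[OF w2(1)] unfolding v_def by blast
    have "char_cubic (rq Ab w1) (rq (R ** transpose R) w2) (rq Db w2) (rq (K ** transpose K) zb) (rq Eb zb) l = 0"
    proof (rule char_cubic_vanishes[OF _ Z])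
      show "0 < w2 \<bullet> w2" using w2(1) by simp
      show "(rq Ab w1 - l) * (v \<bullet> (matrix_inv (Ab - l *\<^sub>R mat 1) *v v)) = rq (R ** transpose R) w2 * (w2 \<bullet> w2)"
        using w1 rq_shift[OF w1(1)] rq_mult_transpose[of R w2] unfolding v_def by simp
      show "rq (schur l) w2 = (l - 1) * (v \<bullet> (matrix_inv (Ab - l *\<^sub>R mat 1) *v v)) / (w2 \<bullet> w2) + l - rq Db w2"
        unfolding v_def by (rule rq_schur[OF w2(1)])
      show "rq (schur l) w2 * nu = rq (K ** transpose K) zb * (zb \<bullet> zb)" using w2(2) uu by simp
      show "(l - 1) * nu = (zb \<bullet> zb) * (l - rq Eb zb)" by (rule nu)
    qed
    then show ?thesis using w1(1) w2(1) by blast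
  qed
qed

lemma eigenvalue_lower_bound: "min emin (min amin (rmin / (amax + rmin + dmax))) \<le> l"
  using outside
proof (cases rule: outside_cases)
  case 1
  then show ?thesis using one_between smax_pos by linarith
next
  case 2
  define u where "u = transpose K *v zb"
  have "u \<bullet> (matrix_inv (schur l) *v u) \<le> 0"
    using inner_inverse_nonpos rq_schur_neg[OF 2] by blast
  moreover have "l - 1 \<le> 0" using 2 one_between by linarith
  ultimately have "0 \<le> (zb \<bullet> zb) * (l - rq Eb zb)"
    using third_block_identity mult_nonpos_nonpos unfolding u_def by metis
  then have "rq Eb zb \<le> l"
    using mult_le_cancel_left_pos[of "zb \<bullet> zb" 0 "l - rq Eb zb"] z_nonzero by simp
  then show ?thesis using rq_Eb[OF z_nonzero] by linarith
qed

lemma eigenvalue_upper_bound: "l \<le> amax + smax + xmax"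
  using outside
proof (cases rule: outside_cases)
  case 1
  obtain w1 w2 where w: "w1 \<noteq> 0" "w2 \<noteq> 0"
    "char_cubic (rq Ab w1) (rq (R ** transpose R) w2) (rq Db w2) (rq (K ** transpose K) zb) (rq Eb zb) l = 0"
    using char_cubic_exists by blast
  have "l \<le> rq Ab w1 + (rq (R ** transpose R) w2 + rq Db w2) + (rq (K ** transpose K) zb + rq Eb zb)"
    using w(3) rq_pos[OF Ab w(1)] rq_pos[OF Eb z_nonzero] rq_mult_transpose_nonneg[of R w2]
      rq_mult_transpose_nonneg[of K zb] spsd_rq_nonneg[OF Db]
    by (intro char_cubic_root_le) auto
  then show ?thesis using rq_Ab[OF w(1)] rq_S[OF w(2)] rq_X[OF z_nonzero] by linarith
next
  case 2
  then show ?thesis using one_between smax_pos xmax_pos by linarith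
qed

end

end

section \<open>The preconditioned eigenvalue problem\<close>

lemma transpose_full_row_rank_injective:
  fixes B :: "real^'n^'m"
  assumes "rank B = CARD('m)" "transpose B *v x = 0"
  shows "x = 0"
  using assms matrix_nonfull_linear_equations_eq[of "transpose B"] by (auto simp: rank_transpose)

lemma transpose_scaled_full_row_rank_nonzero:
  fixes B :: "real^'n^'m" and H1 :: "real^'n^'n" and H2 :: "real^'m^'m"
  assumes H: "spd H1" "spd H2" and B: "rank B = CARD('m)" and w: "w \<noteq> 0"
  shows "transpose (inv_sqrt H2 ** B ** inv_sqrt H1) *v w \<noteq> 0"
proof -
  have "inv_sqrt H2 *v w \<noteq> 0"
    using invertible_mult_vec_eq_0_iff[OF invertible_inv_sqrt[OF H(2)]] w by blast
  then have "transpose B *v (inv_sqrt H2 *v w) \<noteq> 0"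
    using transpose_full_row_rank_injective[OF B] by blast
  then have "inv_sqrt H1 *v (transpose B *v (inv_sqrt H2 *v w)) \<noteq> 0"
    using invertible_mult_vec_eq_0_iff[OF invertible_inv_sqrt[OF H(1)]] by blast
  then show ?thesis unfolding transpose_inv_sqrt_congruence[OF H] matrix_vector_mul_assoc[symmetric] .
qed

lemma rq_schur_congruence_le_lam_max:
  fixes A :: "real^'n^'n" and S D :: "real^'m^'m" and B :: "real^'n^'m"
  assumes A: "spd A" and S: "spd S" and D: "sym_mat D" and w: "w \<noteq> 0"
  defines "R \<equiv> inv_sqrt S ** B ** inv_sqrt A"
  shows "rq (R ** transpose R) w + rq (inv_sqrt S ** D ** inv_sqrt S) w
    \<le> lam_max (matrix_inv S ** (D + B ** matrix_inv A ** transpose B))"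
proof -
  have "sym_mat (D + B ** matrix_inv A ** transpose B)"
    using sym_mat_add[OF D sym_mat_mult_transpose_congruence]
      sym_mat_matrix_inv[OF spd_sym[OF A] spd_invertible[OF A]] by blast
  from rq_inv_sqrt_congruence_le_lam_max[OF S this w] show ?thesis
    unfolding inv_sqrt_congruence_schur[OF A S] R_def by (simp add: rq_add add.commute)
qed

lemma scaled_block_system_of_preconditioner:
  fixes A Ahat :: "real^'n^'n" and B :: "real^'n^'m" and C :: "real^'m^'p"
    and D Shat :: "real^'m^'m" and E Xhat :: "real^'p^'p"
  assumes A: "spd A" and E: "spd E" and B: "rank B = CARD('m)" and D: "spsd D"
    and hats: "spd Ahat" "spd Shat" "spd Xhat"
    and one: "lam_min (matrix_inv Ahat ** A) \<le> 1" "1 \<le> lam_max (matrix_inv Ahat ** A)"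
  defines "R \<equiv> inv_sqrt Shat ** B ** inv_sqrt Ahat" and "K \<equiv> inv_sqrt Xhat ** C ** inv_sqrt Shat"
  shows "scaled_block_system (inv_sqrt Ahat ** A ** inv_sqrt Ahat) R (inv_sqrt Shat ** D ** inv_sqrt Shat)
    K (inv_sqrt Xhat ** E ** inv_sqrt Xhat)
    (lam_min (matrix_inv Ahat ** A)) (lam_max (matrix_inv Ahat ** A)) (lam_min (R ** transpose R))
    (lam_max (matrix_inv Shat ** D)) (lam_max (matrix_inv Shat ** (D + B ** matrix_inv Ahat ** transpose B)))
    (lam_min (matrix_inv Xhat ** E)) (lam_max (matrix_inv Xhat ** (E + C ** matrix_inv Shat ** transpose C)))"
proof
  have symD: "sym_mat D" using D unfolding spsd_def by blast
  show "spd (inv_sqrt Ahat ** A ** inv_sqrt Ahat)" "spd (inv_sqrt Xhat ** E ** inv_sqrt Xhat)"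
    using spd_congruence A E sym_inv_sqrt invertible_inv_sqrt hats by blast+
  show "spsd (inv_sqrt Shat ** D ** inv_sqrt Shat)"
    using spsd_congruence[OF D sym_inv_sqrt[OF hats(2)]] .
  show "lam_min (matrix_inv Ahat ** A) \<le> rq (inv_sqrt Ahat ** A ** inv_sqrt Ahat) w
      \<and> rq (inv_sqrt Ahat ** A ** inv_sqrt Ahat) w \<le> lam_max (matrix_inv Ahat ** A)" if "w \<noteq> 0" for w
    using lam_min_le_rq_inv_sqrt_congruence rq_inv_sqrt_congruence_le_lam_max hats(1) spd_sym[OF A] that
    by blast
  show "lam_min (R ** transpose R) \<le> rq (R ** transpose R) w" if "w \<noteq> 0" for w
    using lam_min_le_rq[OF sym_mat_mult_transpose that] .
  show "0 < lam_min (R ** transpose R)"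
    using lam_min_pos[OF sym_mat_mult_transpose] rq_mult_transpose[of R]
      transpose_scaled_full_row_rank_nonzero[OF hats(1,2) B] unfolding R_def
    by (metis inner_gt_zero_iff zero_less_mult_pos2)
  show "rq (inv_sqrt Shat ** D ** inv_sqrt Shat) w \<le> lam_max (matrix_inv Shat ** D)" if "w \<noteq> 0" for w
    using rq_inv_sqrt_congruence_le_lam_max[OF hats(2) symD that] .
  show "rq (R ** transpose R) w + rq (inv_sqrt Shat ** D ** inv_sqrt Shat) w
      \<le> lam_max (matrix_inv Shat ** (D + B ** matrix_inv Ahat ** transpose B))" if "w \<noteq> 0" for w
    unfolding R_def by (rule rq_schur_congruence_le_lam_max[OF hats(1,2) symD that])
  show "lam_min (matrix_inv Xhat ** E) \<le> rq (inv_sqrt Xhat ** E ** inv_sqrt Xhat) w" if "w \<noteq> 0" for w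
    using lam_min_le_rq_inv_sqrt_congruence[OF hats(3) spd_sym[OF E] that] .
  show "rq (K ** transpose K) w + rq (inv_sqrt Xhat ** E ** inv_sqrt Xhat) w
      \<le> lam_max (matrix_inv Xhat ** (E + C ** matrix_inv Shat ** transpose C))" if "w \<noteq> 0" for w
    unfolding K_def by (rule rq_schur_congruence_le_lam_max[OF hats(2,3) spd_sym[OF E] that])
qed (use one in auto)

lemma sum_UNIV_sum_type:
  "(\<Sum>j\<in>(UNIV::('a::finite + 'b::finite) set). g j) = (\<Sum>a\<in>UNIV. g (Inl a)) + (\<Sum>b\<in>UNIV. g (Inr b))"
  using sum.Plus[of "UNIV::'a set" "UNIV::'b set" g] by (simp add: comp_def)

definition upper_part :: "real^(('n::finite + 'm::finite) + 'p::finite) \<Rightarrow> real^'n" where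
  "upper_part v = (\<chi> i. v $ Inl (Inl i))"

definition middle_part :: "real^(('n::finite + 'm::finite) + 'p::finite) \<Rightarrow> real^'m" where
  "middle_part v = (\<chi> i. v $ Inl (Inr i))"

definition lower_part :: "real^(('n::finite + 'm::finite) + 'p::finite) \<Rightarrow> real^'p" where
  "lower_part v = (\<chi> i. v $ Inr i)"

lemma block_vector_eq_iff:
  "v = w \<longleftrightarrow> upper_part v = upper_part w \<and> middle_part v = middle_part w \<and> lower_part v = lower_part w"
proof
  assume parts: "upper_part v = upper_part w \<and> middle_part v = middle_part w \<and> lower_part v = lower_part w"
  have "v $ i = w $ i" for i
  proof (cases i)
    case (Inl a)
    then show ?thesis using parts by (cases a) (auto simp: upper_part_def middle_part_def vec_eq_iff)
  next
    case (Inr c)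
    then show ?thesis using parts by (auto simp: lower_part_def vec_eq_iff)
  qed
  then show "v = w" by (simp add: vec_eq_iff)
qed simp

lemma block_parts_zero [simp]: "upper_part 0 = 0" "middle_part 0 = 0" "lower_part 0 = 0"
  by (simp_all add: upper_part_def middle_part_def lower_part_def vec_eq_iff)

lemma block_parts_scaleR [simp]:
  "upper_part (c *\<^sub>R v) = c *\<^sub>R upper_part v" "middle_part (c *\<^sub>R v) = c *\<^sub>R middle_part v"
  "lower_part (c *\<^sub>R v) = c *\<^sub>R lower_part v"
  by (simp_all add: upper_part_def middle_part_def lower_part_def vec_eq_iff)

lemma block3_mult_vec:
  fixes M11 :: "real^'n^'n" and M12 :: "real^'m^'n" and M13 :: "real^'p^'n"
    and M21 :: "real^'n^'m" and M22 :: "real^'m^'m" and M23 :: "real^'p^'m"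
    and M31 :: "real^'n^'p" and M32 :: "real^'m^'p" and M33 :: "real^'p^'p"
  shows "upper_part (block3 M11 M12 M13 M21 M22 M23 M31 M32 M33 *v v)
      = M11 *v upper_part v + M12 *v middle_part v + M13 *v lower_part v"
    "middle_part (block3 M11 M12 M13 M21 M22 M23 M31 M32 M33 *v v)
      = M21 *v upper_part v + M22 *v middle_part v + M23 *v lower_part v"
    "lower_part (block3 M11 M12 M13 M21 M22 M23 M31 M32 M33 *v v)
      = M31 *v upper_part v + M32 *v middle_part v + M33 *v lower_part v"
  by (simp_all add: block3_def matrix_vector_mult_def sum_UNIV_sum_type upper_part_def middle_part_def
      lower_part_def vec_eq_iff)

lemma invertible_block3_upper_triangular:
  fixes M11 :: "real^'n^'n" and M12 :: "real^'m^'n" and M13 :: "real^'p^'n"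
    and M22 :: "real^'m^'m" and M23 :: "real^'p^'m" and M33 :: "real^'p^'p"
  assumes "invertible M11" "invertible M22" "invertible M33"
  shows "invertible (block3 M11 M12 M13 0 M22 M23 0 0 M33)"
proof (rule invertibleI_kernel)
  fix v assume "block3 M11 M12 M13 0 M22 M23 0 0 M33 *v v = 0"
  then have "M33 *v lower_part v = 0" "M22 *v middle_part v + M23 *v lower_part v = 0"
    "M11 *v upper_part v + M12 *v middle_part v + M13 *v lower_part v = 0"
    unfolding block_vector_eq_iff[of _ 0] block3_mult_vec by simp_all
  then show "v = 0"
    using invertible_mult_vec_eq_0_iff[OF assms(1)] invertible_mult_vec_eq_0_iff[OF assms(2)]
      invertible_mult_vec_eq_0_iff[OF assms(3)]
    unfolding block_vector_eq_iff[of v 0] by simp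
qed

lemma real_eigs_mult_inverse:
  fixes M P :: "real^'n^'n"
  assumes P: "invertible P" and l: "l \<in> real_eigs (M ** matrix_inv P)"
  obtains v where "v \<noteq> 0" "M *v v = l *\<^sub>R (P *v v)"
proof -
  obtain u where u: "u \<noteq> 0" "(M ** matrix_inv P) *v u = l *\<^sub>R u" using l unfolding real_eigs_def by blast
  show thesis
  proof
    show "matrix_inv P *v u \<noteq> 0" using u(1) matrix_inv_cancel_right[OF P, of u] by auto
    have "M *v (matrix_inv P *v u) = (M ** matrix_inv P) *v u" by (simp add: matrix_vector_mul_assoc)
    then show "M *v (matrix_inv P *v u) = l *\<^sub>R (P *v (matrix_inv P *v u))"
      using u(2) by (simp add: matrix_inv_cancel_right[OF P])
  qed
qed

lemma preconditioned_block_equations: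
  fixes A Ahat :: "real^'n^'n" and B :: "real^'n^'m" and C :: "real^'m^'p"
    and D Shat :: "real^'m^'m" and E Xhat :: "real^'p^'p"
  assumes hats: "spd Ahat" "spd Shat" "spd Xhat"
    and eig: "l \<in> real_eigs (block3 A (transpose B) 0 B (- D) (transpose C) 0 C E
        ** matrix_inv (block3 Ahat (transpose B) 0 0 (- Shat) (transpose C) 0 0 Xhat))"
  obtains x y z where "x \<noteq> 0 \<or> y \<noteq> 0 \<or> z \<noteq> 0"
    "A *v x + transpose B *v y = l *\<^sub>R (Ahat *v x + transpose B *v y)"
    "B *v x - D *v y + transpose C *v z = l *\<^sub>R (transpose C *v z - Shat *v y)"
    "C *v y + E *v z = l *\<^sub>R (Xhat *v z)"
proof -
  have "invertible (block3 Ahat (transpose B) 0 0 (- Shat) (transpose C) 0 0 Xhat)"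
    using hats by (intro invertible_block3_upper_triangular invertible_uminus spd_invertible)
  then obtain v where "v \<noteq> 0"
    "block3 A (transpose B) 0 B (- D) (transpose C) 0 C E *v v
      = l *\<^sub>R (block3 Ahat (transpose B) 0 0 (- Shat) (transpose C) 0 0 Xhat *v v)"
    using real_eigs_mult_inverse eig by blast
  then show thesis
    using that[of "upper_part v" "middle_part v" "lower_part v"]
    unfolding block_vector_eq_iff[of v 0] block_vector_eq_iff[of "block3 _ _ _ _ _ _ _ _ _ *v v"]
    by (simp add: block3_mult_vec uminus_matrix_vector algebra_simps)
qed

text \<open>The substitution \<open>x = Ahat\<^sup>-\<^sup>1\<^sup>/\<^sup>2 xb\<close>, \<open>y = Shat\<^sup>-\<^sup>1\<^sup>/\<^sup>2 yb\<close>,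
  \<open>z = Xhat\<^sup>-\<^sup>1\<^sup>/\<^sup>2 zb\<close>, followed by multiplication of the block rows by the same
  matrices, turns the diagonal blocks of the preconditioner into identities.\<close>

lemma preconditioned_scaled_equations:
  fixes A Ahat :: "real^'n^'n" and B :: "real^'n^'m" and C :: "real^'m^'p"
    and D Shat :: "real^'m^'m" and E Xhat :: "real^'p^'p"
  assumes hats: "spd Ahat" "spd Shat" "spd Xhat"
    and eig: "l \<in> real_eigs (block3 A (transpose B) 0 B (- D) (transpose C) 0 C E
        ** matrix_inv (block3 Ahat (transpose B) 0 0 (- Shat) (transpose C) 0 0 Xhat))"
  defines "Sa \<equiv> inv_sqrt Ahat" and "Ss \<equiv> inv_sqrt Shat" and "Sx \<equiv> inv_sqrt Xhat"
  obtains xb yb zb where "xb \<noteq> 0 \<or> yb \<noteq> 0 \<or> zb \<noteq> 0"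
    "(Sa ** A ** Sa) *v xb - l *\<^sub>R xb = (l - 1) *\<^sub>R (transpose (Ss ** B ** Sa) *v yb)"
    "(Ss ** B ** Sa) *v xb - (Ss ** D ** Ss) *v yb + l *\<^sub>R yb = (l - 1) *\<^sub>R (transpose (Sx ** C ** Ss) *v zb)"
    "(Sx ** C ** Ss) *v yb + (Sx ** E ** Sx) *v zb = l *\<^sub>R zb"
proof -
  obtain x y z where nz: "x \<noteq> 0 \<or> y \<noteq> 0 \<or> z \<noteq> 0"
    and E1: "A *v x + transpose B *v y = l *\<^sub>R (Ahat *v x + transpose B *v y)"
    and E2: "B *v x - D *v y + transpose C *v z = l *\<^sub>R (transpose C *v z - Shat *v y)"
    and E3: "C *v y + E *v z = l *\<^sub>R (Xhat *v z)"
    using preconditioned_block_equations[OF hats eig] by blast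
  define xb yb zb where "xb = matrix_inv Sa *v x" and "yb = matrix_inv Ss *v y" and "zb = matrix_inv Sx *v z"
  have x: "x = Sa *v xb" and y: "y = Ss *v yb" and z: "z = Sx *v zb"
    unfolding xb_def yb_def zb_def Sa_def Ss_def Sx_def
    using matrix_inv_cancel_right invertible_inv_sqrt hats by metis+
  have RT: "transpose (Ss ** B ** Sa) = Sa ** transpose B ** Ss"
    and KT: "transpose (Sx ** C ** Ss) = Ss ** transpose C ** Sx"
    unfolding Sa_def Ss_def Sx_def using transpose_inv_sqrt_congruence hats by blast+
  note id = inv_sqrt_congruence_mult_vec[OF hats(1), folded Sa_def]
    inv_sqrt_congruence_mult_vec[OF hats(2), folded Ss_def]
    inv_sqrt_congruence_mult_vec[OF hats(3), folded Sx_def]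
  show thesis
  proof
    show "xb \<noteq> 0 \<or> yb \<noteq> 0 \<or> zb \<noteq> 0" using nz unfolding x y z by auto
    have "Sa *v (A *v x + transpose B *v y) = Sa *v (l *\<^sub>R (Ahat *v x + transpose B *v y))"
      using E1 by simp
    then show "(Sa ** A ** Sa) *v xb - l *\<^sub>R xb = (l - 1) *\<^sub>R (transpose (Ss ** B ** Sa) *v yb)"
      unfolding RT x y
      by (simp add: matrix_vector_mul_assoc[symmetric] matrix_vector_right_distrib
          matrix_vector_mult_scaleR id algebra_simps)
    have "Ss *v (B *v x - D *v y + transpose C *v z) = Ss *v (l *\<^sub>R (transpose C *v z - Shat *v y))"
      using E2 by simp
    then show "(Ss ** B ** Sa) *v xb - (Ss ** D ** Ss) *v yb + l *\<^sub>R yb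
        = (l - 1) *\<^sub>R (transpose (Sx ** C ** Ss) *v zb)"
      unfolding KT x y z
      by (simp add: matrix_vector_mul_assoc[symmetric] matrix_vector_right_distrib
          matrix_vector_mult_diff_distrib matrix_vector_mult_scaleR id algebra_simps)
    have "Sx *v (C *v y + E *v z) = Sx *v (l *\<^sub>R (Xhat *v z))"
      using E3 by simp
    then show "(Sx ** C ** Ss) *v yb + (Sx ** E ** Sx) *v zb = l *\<^sub>R zb"
      unfolding y z
      by (simp add: matrix_vector_mul_assoc[symmetric] matrix_vector_right_distrib
          matrix_vector_mult_scaleR id)
  qed
qed

theorem theorem2:
  fixes A Ahat :: "real^'n^'n" and B :: "real^'n^'m" and C :: "real^'m^'p"
    and D Shat :: "real^'m^'m" and E Xhat :: "real^'p^'p" and lambda :: real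
  assumes dims: "CARD('n) \<ge> CARD('m)" "CARD('n) \<ge> CARD('p)"
    and A: "spd A" and E: "spd E"
    and B: "rank B = CARD('m)"
    and C: "rank C = min CARD('p) CARD('m)"
    and D: "spsd D"
    and hats: "spd Ahat" "spd Shat" "spd Xhat"
  defines "calA \<equiv> block3 A (transpose B) 0 B (- D) (transpose C) 0 C E"
    and "calP \<equiv> block3 Ahat (transpose B) 0 0 (- Shat) (transpose C) 0 0 Xhat"
    and "Abar \<equiv> inv_sqrt Ahat ** A ** inv_sqrt Ahat"
    and "Dbar \<equiv> inv_sqrt Shat ** D ** inv_sqrt Shat"
    and "Ebar \<equiv> inv_sqrt Xhat ** E ** inv_sqrt Xhat"
    and "R \<equiv> inv_sqrt Shat ** B ** inv_sqrt Ahat"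
    and "K \<equiv> inv_sqrt Xhat ** C ** inv_sqrt Shat"
    and "gAmin \<equiv> lam_min (matrix_inv Ahat ** A)"
    and "gAmax \<equiv> lam_max (matrix_inv Ahat ** A)"
    and "gSmax \<equiv> lam_max (matrix_inv Shat ** (D + B ** matrix_inv Ahat ** transpose B))"
    and "gXmax \<equiv> lam_max (matrix_inv Xhat ** (E + C ** matrix_inv Shat ** transpose C))"
    and "gDmax \<equiv> lam_max (matrix_inv Shat ** D)"
    and "gEmin \<equiv> lam_min (matrix_inv Xhat ** E)"
    and "gRmin \<equiv> lam_min ((inv_sqrt Shat ** B ** inv_sqrt Ahat) ** transpose (inv_sqrt Shat ** B ** inv_sqrt Ahat))"
  assumes one: "gAmin \<le> 1" "1 \<le> gAmax"
    and eig: "lambda \<in> real_eigs (calA ** matrix_inv calP)"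
    and out: "lambda \<notin> {min gAmin (gRmin / (gAmax + gRmin + gDmax)) .. gAmax + gSmax}"
  shows "(\<exists>(w1::real^'n) (w2::real^'m) (w3::real^'p). w1 \<noteq> 0 \<and> w2 \<noteq> 0 \<and> w3 \<noteq> 0 \<and>
           (let gA = rq Abar w1; gR = rq (R ** transpose R) w2; gD = rq Dbar w2;
                gK = rq (K ** transpose K) w3; gE = rq Ebar w3;
                gS = gR + gD; gX = gK + gE
            in lambda ^ 3 - (gA + gS + gX) * lambda ^ 2
               + (gA * gX + gK + gE * gS + gD * gA + gR) * lambda
               - (gA * gK + gE * gA * gD + gE * gR) = 0))
       \<and> min gEmin (min gAmin (gRmin / (gAmax + gRmin + gDmax))) \<le> lambda
       \<and> lambda \<le> gAmax + gSmax + gXmax"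
proof -
  interpret scaled_block_system Abar R Dbar K Ebar gAmin gAmax gRmin gDmax gSmax gEmin gXmax
    using scaled_block_system_of_preconditioner[OF A E B D hats] one
    unfolding Abar_def R_def Dbar_def K_def Ebar_def gAmin_def gAmax_def gRmin_def gDmax_def gSmax_def
      gEmin_def gXmax_def by blast
  obtain xb yb zb where nz: "xb \<noteq> 0 \<or> yb \<noteq> 0 \<or> zb \<noteq> 0"
    and e1: "Abar *v xb - lambda *\<^sub>R xb = (lambda - 1) *\<^sub>R (transpose R *v yb)"
    and e2: "R *v xb - Dbar *v yb + lambda *\<^sub>R yb = (lambda - 1) *\<^sub>R (transpose K *v zb)"
    and e3: "K *v yb + Ebar *v zb = lambda *\<^sub>R zb"
    using preconditioned_scaled_equations[OF hats eig[unfolded calA_def calP_def]]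
    unfolding Abar_def Dbar_def Ebar_def R_def K_def by blast
  obtain w1 w2 where "w1 \<noteq> 0" "w2 \<noteq> 0"
    "char_cubic (rq Abar w1) (rq (R ** transpose R) w2) (rq Dbar w2) (rq (K ** transpose K) zb) (rq Ebar zb) lambda = 0"
    using char_cubic_exists[OF e1 e2 e3 nz out] by blast
  then show ?thesis
    using z_nonzero[OF e1 e2 e3 nz out] eigenvalue_lower_bound[OF e1 e2 e3 nz out]
      eigenvalue_upper_bound[OF e1 e2 e3 nz out]
    unfolding Let_def char_cubic_def by blast
qed

end
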